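(* Let $n\in\mathbb{N}$ and $\kappa,\kappa'\in\mathcal{K}_n$. Suppose that for some $\mu,\mu'\geq0$ and $0\leq\lambda,\lambda'\leq1$ we have for all $E\geq1$ $$|\kappa(Q,R,p,E)|\lesssim E^{-\mu}\min_{s\in[\lambda-1,1-\lambda]}\rho_{n,\lambda+s}(Q,E)\tilde\rho_{n,\lambda-s}(R,E),$$ $$|\kappa'(Q,R,p,E)|\lesssim E^{-\mu'}\min_{s\in[\lambda'-1,1-\lambda']}\rho_{n,\lambda'+s}(Q,E)\tilde\rho_{n,\lambda'-s}(R,E).$$ Then for all $0\leq\sigma\leq1$ satisfying $\max\{\lambda,\lambda'\}\leq\sigma<\lambda+\lambda'+n(1-\delta/\gamma)$, and with $\tau=\mu+\mu'+(\lambda+\lambda'+n(1-\delta/\gamma)-1)_+$, we have for $E\geq1$ $$|\kappa H_0^{-1}\star_n\kappa'|(Q,R,p,E)\lesssim E^{-\tau}\min_{s\in[\sigma-1,1-\sigma]}\rho_{n,\sigma+s}(Q,E)\tilde\rho_{n,\sigma-s}(R,E).$$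
   Context: Standing assumptions: $d\in\mathbb{N}$; $v:\mathbb{R}^d\to\mathbb{R}$, $\omega,\Omega:\mathbb{R}^d\to[0,\infty)$ rotation invariant; $\alpha<d/2$, $\gamma\in\{1,2\}$, $\delta:=d-2\alpha-\gamma<\gamma$; constants $C>0,c_b>0,c_p\geq0$ with $\Omega\in C^\gamma$, $|v(k)|\leq C|k|^{-\alpha}$, $\omega(k)\geq C(c_b+k^2)^{\gamma/2}$, $\Omega(p)\geq C(c_p+p^2)^{\gamma/2}$, $|\partial^\nu\Omega(p)|\leq C(c_p+p^2)^{(\gamma-|\nu|)/2}$ for $|\nu|\in\{1,\gamma\}$. $\lesssim$: inequality up to a constant independent of all variables; $x_+:=\max\{x,0\}$. Notation: for $X\in(\mathbb{R}^d)^n$, $X_a^b:=(x_a,\dots,x_b)$, $\omega(X_a^b):=\sum_{j=a}^b\omega(x_j)$; $X_J$ for a permutation $J=(j_1,\dots,j_n)$ is $(x_{j_1},\dots,x_{j_n})$. $\rho_{n,\lambda}(Q,E)=\Big(\prod_{j=1}^{n-1}\frac{|v(q_j)|}{E+\omega(Q_j^n)}\Big)\frac{|v(q_n)|}{(E+\omega(q_n))^{(1+\lambda)/2}}$, $\tilde\rho_{n,\lambda}(R,E)=\frac{|v(r_1)|}{(E+\omega(r_1))^{(1+\lambda)/2}}\prod_{j=2}^n\frac{|v(r_j)|}{E+\omega(R_1^j)}$. Kernels: an $n$-variable kernel is a locally square integrable $\kappa(Q,R,p,E)$, $Q,R\in\mathbb{R}^{nd}$, $p\in\mathbb{R}^d$,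 $E>0$; $\mathcal{K}_n$: such kernels with $|\kappa(Q,R,p,E)|\lesssim\min_{s\in[-1,1]}\rho_{n,s}(Q,E)\tilde\rho_{n,-s}(R,E)$. Full contraction product: $(\kappa H_0^{-1}\star_n\kappa')(Q,R,p,E)=\sum_{J}\int_{\mathbb{R}^{nd}}\frac{\kappa(Q,\Xi,p,E)\,\kappa'(U,R,p,E)}{\Omega(p+\sum_{i=1}^n\xi_i)+E+\omega(\Xi)}\mathrm{d}\Xi$, the sum running over all permutations $J=(j_1,\dots,j_n)$ of $\{1,\dots,n\}$ and $U\in\mathbb{R}^{nd}$ defined by $U_J=\Xi$. *)

theory Defs
  imports "HOL-Analysis.Analysis" "HOL-Combinatorics.Permutations"
begin

(* Points of R^d are vectors of type real^'d (d = CARD('d)).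
   Points of R^{nd} are functions X :: nat => real^'d, where only the
   components X 0, ..., X (n-1) matter (0-based indexing: x_j of the paper
   is X (j-1)). *)

definition partial_deriv :: "'d::finite \<Rightarrow> (real^'d \<Rightarrow> real) \<Rightarrow> real^'d \<Rightarrow> real" where
  "partial_deriv i f p = deriv (\<lambda>t. f (p + t *\<^sub>R axis i 1)) 0"

definition has_cont_partials :: "(real^'d::finite \<Rightarrow> real) \<Rightarrow> bool" where
  "has_cont_partials f \<longleftrightarrow>
     (\<forall>i p. (\<lambda>t. f (p + t *\<^sub>R axis i 1)) differentiable (at 0)) \<and>
     (\<forall>i. continuous_on UNIV (partial_deriv i f))"

definition C_k :: "nat \<Rightarrow> (real^'d::finite \<Rightarrow> real) \<Rightarrow> bool" where
  "C_k k f \<longleftrightarrow> has_cont_partials f \<and>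
     (k = 2 \<longrightarrow> (\<forall>i. has_cont_partials (partial_deriv i f)))"

definition rotation_invariant :: "(real^'d::finite \<Rightarrow> 'b) \<Rightarrow> bool" where
  "rotation_invariant f \<longleftrightarrow> (\<forall>g k. orthogonal_transformation g \<longrightarrow> f (g k) = f k)"

definition standing_assumptions ::
  "(real^'d::finite \<Rightarrow> real) \<Rightarrow> (real^'d \<Rightarrow> real) \<Rightarrow> (real^'d \<Rightarrow> real) \<Rightarrow> real \<Rightarrow> nat \<Rightarrow> bool" where
  "standing_assumptions v \<omega> \<Omega> \<alpha> \<gamma> \<longleftrightarrow>
     (\<forall>k. \<omega> k \<ge> 0) \<and> (\<forall>k. \<Omega> k \<ge> 0) \<and>
     rotation_invariant v \<and> rotation_invariant \<omega> \<and> rotation_invariant \<Omega> \<and>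
     \<alpha> < real CARD('d) / 2 \<and> \<gamma> \<in> {1, 2} \<and>
     real CARD('d) - 2 * \<alpha> - real \<gamma> < real \<gamma> \<and>
     C_k \<gamma> \<Omega> \<and>
     (\<exists>C cb cp. C > 0 \<and> cb > 0 \<and> cp \<ge> 0 \<and>
        (\<forall>k. (k \<noteq> 0 \<or> \<alpha> \<le> 0) \<longrightarrow>
              \<bar>v k\<bar> \<le> C * (if k = 0 \<and> \<alpha> = 0 then 1 else norm k powr (- \<alpha>))) \<and>
        (\<forall>k. \<omega> k \<ge> C * sqrt (cb + (norm k)\<^sup>2) ^ \<gamma>) \<and>
        (\<forall>p. \<Omega> p \<ge> C * sqrt (cp + (norm p)\<^sup>2) ^ \<gamma>) \<and>
        (\<forall>i p. \<bar>partial_deriv i \<Omega> p\<bar> \<le> C * sqrt (cp + (norm p)\<^sup>2) ^ (\<gamma> - 1)) \<and>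
        (\<gamma> = 2 \<longrightarrow> (\<forall>i j p. \<bar>partial_deriv i (partial_deriv j \<Omega>) p\<bar> \<le> C)))"

definition delta :: "real \<Rightarrow> nat \<Rightarrow> 'd::finite itself \<Rightarrow> real" where
  "delta \<alpha> \<gamma> _ = real CARD('d) - 2 * \<alpha> - real \<gamma>"

(* \<omega>(X_a^b) = \<Sum>_{j=a}^b \<omega>(x_j), 1-based in the paper; here 0-based. *)

definition rho :: "(real^'d::finite \<Rightarrow> real) \<Rightarrow> (real^'d \<Rightarrow> real) \<Rightarrow> nat \<Rightarrow> real
                    \<Rightarrow> (nat \<Rightarrow> real^'d) \<Rightarrow> real \<Rightarrow> real" where
  "rho v \<omega> n l Q E =
     (\<Prod>j<n-1. \<bar>v (Q j)\<bar> / (E + (\<Sum>i=j..n-1. \<omega> (Q i)))) *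
     (\<bar>v (Q (n-1))\<bar> / (E + \<omega> (Q (n-1))) powr ((1 + l) / 2))"

definition rho_tilde :: "(real^'d::finite \<Rightarrow> real) \<Rightarrow> (real^'d \<Rightarrow> real) \<Rightarrow> nat \<Rightarrow> real
                    \<Rightarrow> (nat \<Rightarrow> real^'d) \<Rightarrow> real \<Rightarrow> real" where
  "rho_tilde v \<omega> n l R E =
     (\<bar>v (R 0)\<bar> / (E + \<omega> (R 0)) powr ((1 + l) / 2)) *
     (\<Prod>j\<in>{1..<n}. \<bar>v (R j)\<bar> / (E + (\<Sum>i=0..j. \<omega> (R i))))"

(* Lebesgue measure on R^{nd}, realised on extensional functions {..<n} -> R^d *)
definition Rnd :: "nat \<Rightarrow> (nat \<Rightarrow> real^'d::finite) measure" where
  "Rnd n = PiM {..<n} (\<lambda>_. lborel)"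

type_synonym 'd kernel =
  "(nat \<Rightarrow> real^'d) \<Rightarrow> (nat \<Rightarrow> real^'d) \<Rightarrow> real^'d \<Rightarrow> real \<Rightarrow> complex"

definition locally_square_integrable :: "nat \<Rightarrow> 'd::finite kernel \<Rightarrow> bool" where
  "locally_square_integrable n \<kappa> \<longleftrightarrow>
     (\<forall>p E. E > 0 \<longrightarrow>
        (\<lambda>(Q, R). \<kappa> Q R p E) \<in> borel_measurable (Rnd n \<Otimes>\<^sub>M Rnd n) \<and>
        (\<forall>r::real. (\<integral>\<^sup>+ (Q, R) \<in> {(Q, R). \<forall>i<n. norm (Q i) \<le> r \<and> norm (R i) \<le> r}.
                 ennreal ((cmod (\<kappa> Q R p E))\<^sup>2) \<partial>(Rnd n \<Otimes>\<^sub>M Rnd n)) < \<infinity>))"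

definition kernel_class :: "(real^'d::finite \<Rightarrow> real) \<Rightarrow> (real^'d \<Rightarrow> real) \<Rightarrow> nat
                             \<Rightarrow> 'd kernel set" where
  "kernel_class v \<omega> n = {\<kappa>. locally_square_integrable n \<kappa> \<and>
     (\<exists>c. \<forall>Q R p E. E > 0 \<longrightarrow>
        cmod (\<kappa> Q R p E) \<le> c * (INF s\<in>{-1..1}. rho v \<omega> n s Q E * rho_tilde v \<omega> n (- s) R E))}"

(* full contraction product  \<kappa> H_0^{-1} \<star>_n \<kappa>' ; for a permutation J of {..<n},
   U with U_J = \<Xi> is  U k = \<Xi> (inv J k). *)
definition full_contraction ::
  "(real^'d::finite \<Rightarrow> real) \<Rightarrow> (real^'d \<Rightarrow> real) \<Rightarrow> nat \<Rightarrow> 'd kernel \<Rightarrow> 'd kernel \<Rightarrow> 'd kernel" where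
  "full_contraction \<omega> \<Omega> n \<kappa> \<kappa>' Q R p E =
     (\<Sum>J\<in>{J. J permutes {..<n}}.
        \<integral>\<Xi>. \<kappa> Q \<Xi> p E * \<kappa>' (\<lambda>k. \<Xi> (inv J k)) R p E /
             complex_of_real (\<Omega> (p + (\<Sum>i<n. \<Xi> i)) + E + (\<Sum>i<n. \<omega> (\<Xi> i))) \<partial>Rnd n)"

end

theory Submission
  imports Defs
begin

(* Fix t in [sigma - 1, 1 - sigma]. The bound on kappa is used with the splitting parameter that
   produces rho_(sigma+t)(Q), the bound on kappa' with the one that produces rho~_(sigma-t)(R);
   what remains under the integral over the contracted variables Xi is rho~_a(Xi) rho_b(Xi o J^-1)
   divided by the resolvent denominator. Each denominator E + omega(xi_i) + ... + omega(xi_j)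
   dominates every E + omega(xi_k) it contains, so the interpolation 1/S <= x^-(1-beta) y^-beta
   splits it into powers of one-particle weights, and the integrand factorises into integrals of
   |v|^2 (E + omega)^-e. By scaling, such an integral is O(E^(1 + delta/gamma - e)) once
   e > 1 + delta/gamma = (d - 2 alpha)/gamma, and beta and the splitting r of the resolvent can be
   chosen so that every exponent exceeds this threshold by a fixed margin. Adding up the exponents
   gives the decay E^-(lambda + lambda' - sigma + n (1 - delta/gamma)), which is at least E^-tau
   because sigma <= 1. *)

section \<open>Weighted integrals over Euclidean space\<close>

lemma powr_minus_le_one: "1 \<le> (x::real) \<Longrightarrow> 0 \<le> a \<Longrightarrow> x powr (-a) \<le> 1"
  by (metis neg_le_0_iff_le not_one_le_zero powr_mono powr_zero_eq_one)

lemma nn_integral_lborel_le_halflines: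
  fixes g :: "real \<Rightarrow> ennreal"
  assumes [measurable]: "g \<in> borel_measurable borel"
  shows "(\<integral>\<^sup>+t. g t \<partial>lborel) \<le>
    (\<integral>\<^sup>+t. g t * indicator {0..} t \<partial>lborel) + (\<integral>\<^sup>+t. g (-t) * indicator {0..} t \<partial>lborel)"
proof -
  have "(\<integral>\<^sup>+t. g t \<partial>lborel) \<le> (\<integral>\<^sup>+t. g t * indicator {0..} t + g t * indicator {..0} t \<partial>lborel)"
    by (intro nn_integral_mono) (auto split: split_indicator)
  also have "\<dots> = (\<integral>\<^sup>+t. g t * indicator {0..} t \<partial>lborel) + (\<integral>\<^sup>+t. g t * indicator {..0} t \<partial>lborel)"
    by (intro nn_integral_add) auto
  also have "(\<integral>\<^sup>+t. g t * indicator {..0} t \<partial>lborel) = (\<integral>\<^sup>+t. g (-t) * indicator {0..} t \<partial>lborel)"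
    by (subst nn_integral_real_affine[where c="-1" and t=0])
      (auto split: split_indicator intro!: nn_integral_cong)
  finally show ?thesis by simp
qed

lemma nn_integral_abs_powr_Icc_finite:
  fixes p :: real
  assumes "p < 1"
  shows "(\<integral>\<^sup>+t. ennreal (\<bar>t\<bar> powr (-p)) * indicator {-1..1} t \<partial>lborel) < \<infinity>"
proof -
  let ?g = "\<lambda>t. ennreal (\<bar>t\<bar> powr (-p)) * indicator {-1..1} t"
  have "((\<lambda>t. t powr (-p)) has_integral (1 / (1 - p))) {0..1}"
    using has_integral_powr_from_0[of "-p" 1] assms by simp
  then have half: "(\<integral>\<^sup>+t. ennreal (t powr (-p)) * indicator {0..1} t \<partial>lborel) = ennreal (1 / (1 - p))"
    by (intro nn_integral_has_integral_lebesgue') auto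
  have "(\<integral>\<^sup>+t. ?g t \<partial>lborel) \<le>
      (\<integral>\<^sup>+t. ?g t * indicator {0..} t \<partial>lborel) + (\<integral>\<^sup>+t. ?g (-t) * indicator {0..} t \<partial>lborel)"
    by (rule nn_integral_lborel_le_halflines) auto
  also have "(\<integral>\<^sup>+t. ?g t * indicator {0..} t \<partial>lborel) = ennreal (1 / (1 - p))"
    unfolding half[symmetric] by (intro nn_integral_cong) (auto split: split_indicator)
  also have "(\<integral>\<^sup>+t. ?g (-t) * indicator {0..} t \<partial>lborel) = ennreal (1 / (1 - p))"
    unfolding half[symmetric] by (intro nn_integral_cong) (auto split: split_indicator)
  finally show ?thesis
    using order.strict_trans1 by fastforce
qed

lemma nn_integral_one_plus_square_powr_finite:
  fixes q :: real
  assumes "q > 1/2"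
  shows "(\<integral>\<^sup>+t. ennreal ((1 + t\<^sup>2) powr (-q)) \<partial>lborel) < \<infinity>"
proof -
  let ?g = "\<lambda>t::real. ennreal ((1 + t\<^sup>2) powr (-q))"
  have "((\<lambda>t. t powr (-(2*q))) has_integral (1 / (2*q - 1))) {1..}"
    using has_integral_powr_to_inf[of "-(2*q)" 1] assms by (simp add: minus_divide_right)
  then have tail: "(\<integral>\<^sup>+t. ennreal (t powr (-(2*q))) * indicator {1..} t \<partial>lborel) = ennreal (1 / (2*q - 1))"
    by (intro nn_integral_has_integral_lebesgue') auto
  have pointwise:
    "?g t * indicator {0..} t \<le> indicator {0..<1} t + ennreal (t powr (-(2*q))) * indicator {1..} t"
    for t
  proof (cases "0 \<le> t \<and> t < 1")
    case True
    have "(1 + t\<^sup>2) powr (-q) \<le> 1"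
      using assms by (intro powr_minus_le_one) auto
    then show ?thesis
      using True by (auto split: split_indicator)
  next
    case False
    have "(1 + t\<^sup>2) powr (-q) \<le> (t\<^sup>2) powr (-q)" if "1 \<le> t"
      using assms that by (intro powr_mono2') auto
    moreover have "(t\<^sup>2) powr (-q) = t powr (-(2*q))" if "1 \<le> t"
      using that by (simp add: powr_powr flip: powr_numeral)
    ultimately show ?thesis
      using False by (auto split: split_indicator intro!: ennreal_leI)
  qed
  have "(\<integral>\<^sup>+t. ?g t * indicator {0..} t \<partial>lborel) \<le>
      (\<integral>\<^sup>+t. indicator {0..<1} t + ennreal (t powr (-(2*q))) * indicator {1..} t \<partial>lborel)"
    by (intro nn_integral_mono pointwise)
  also have "\<dots> = 1 + ennreal (1 / (2*q - 1))"
    by (subst nn_integral_add) (auto simp: tail)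
  finally have half: "(\<integral>\<^sup>+t. ?g t * indicator {0..} t \<partial>lborel) < \<infinity>"
    using order.strict_trans1 by fastforce
  have "(\<integral>\<^sup>+t. ?g t \<partial>lborel) \<le>
      (\<integral>\<^sup>+t. ?g t * indicator {0..} t \<partial>lborel) + (\<integral>\<^sup>+t. ?g (-t) * indicator {0..} t \<partial>lborel)"
    by (rule nn_integral_lborel_le_halflines) auto
  then show ?thesis
    using half by (simp add: order.strict_trans1)
qed

lemma AE_lborel_inner_Basis_nonzero:
  "AE x in (lborel::'a::euclidean_space measure). \<forall>b\<in>Basis. x \<bullet> b \<noteq> 0"
proof (rule eventually_ball_finite)
  show "\<forall>b\<in>(Basis::'a set). AE x in lborel. x \<bullet> b \<noteq> 0"
  proof
    fix b :: 'a assume b: "b \<in> Basis"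
    have "negligible {x::'a. x \<bullet> b = 0}"
      using negligible_standard_hyperplane[OF b, of 0] by simp
    moreover have "closed {x::'a. x \<bullet> b = 0}"
      using closed_hyperplane[of b 0] by (simp add: inner_commute)
    ultimately have "{x::'a. x \<bullet> b = 0} \<in> null_sets lborel"
      by (auto simp: null_sets_completion_iff negligible_iff_null_sets)
    then show "AE x in lborel. x \<bullet> b \<noteq> 0"
      by (rule AE_I') auto
  qed
qed simp

lemma powr_eq_prod_Basis:
  "0 < (y::real) \<Longrightarrow> y powr a = (\<Prod>b\<in>(Basis::'a::euclidean_space set). y powr (a / DIM('a)))"
  by (simp add: prod_constant powr_realpow[symmetric] powr_powr)

lemma norm_powr_le_prod_Basis:
  fixes x :: "'a::euclidean_space"
  assumes "a \<ge> 0" and nonzero: "\<forall>b\<in>Basis. x \<bullet> b \<noteq> 0" and "norm x < 1"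
  shows "norm x powr (-a) \<le> (\<Prod>b\<in>Basis. \<bar>x \<bullet> b\<bar> powr (-a / DIM('a)) * indicator {-1..1} (x \<bullet> b))"
proof -
  have "norm x > 0"
    using nonzero SOME_Basis by (metis inner_zero_left zero_less_norm_iff)
  then have "norm x powr (-a) = (\<Prod>b\<in>(Basis::'a set). norm x powr (-a / DIM('a)))"
    by (rule powr_eq_prod_Basis)
  also have "\<dots> \<le> (\<Prod>b\<in>Basis. \<bar>x \<bullet> b\<bar> powr (-a / DIM('a)) * indicator {-1..1} (x \<bullet> b))"
  proof (intro prod_mono conjI)
    fix b :: 'a assume b: "b \<in> Basis"
    then have "\<bar>x \<bullet> b\<bar> \<le> norm x"
      by (rule Basis_le_norm)
    then show "norm x powr (-a / DIM('a)) \<le> \<bar>x \<bullet> b\<bar> powr (-a / DIM('a)) * indicator {-1..1} (x \<bullet> b)"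
      using assms b by (auto intro!: powr_mono2' simp: divide_nonpos_nonneg indicator_def)
  qed simp
  finally show ?thesis .
qed

lemma one_plus_norm_square_powr_le_prod_Basis:
  fixes x :: "'a::euclidean_space"
  assumes "s \<ge> 0"
  shows "(1 + (norm x)\<^sup>2) powr (-s) \<le> (\<Prod>b\<in>Basis. (1 + (x \<bullet> b)\<^sup>2) powr (-s / DIM('a)))"
proof -
  have "(1 + (norm x)\<^sup>2) powr (-s) = (\<Prod>b\<in>(Basis::'a set). (1 + (norm x)\<^sup>2) powr (-s / DIM('a)))"
    by (rule powr_eq_prod_Basis) (simp add: add_pos_nonneg)
  also have "\<dots> \<le> (\<Prod>b\<in>Basis. (1 + (x \<bullet> b)\<^sup>2) powr (-s / DIM('a)))"
  proof (intro prod_mono conjI)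
    fix b :: 'a assume "b \<in> Basis"
    then have "(x \<bullet> b)\<^sup>2 \<le> (norm x)\<^sup>2"
      by (metis Basis_le_norm abs_le_square_iff abs_norm_cancel)
    then show "(1 + (norm x)\<^sup>2) powr (-s / DIM('a)) \<le> (1 + (x \<bullet> b)\<^sup>2) powr (-s / DIM('a))"
      using assms by (intro powr_mono2') (auto simp: divide_nonpos_nonneg add_pos_nonneg)
  qed simp
  finally show ?thesis .
qed

lemma powr_le_one_plus_square_powr:
  fixes r a :: real
  assumes "r \<ge> 0" and "a \<le> 0 \<or> r \<ge> 1"
  shows "r powr (-a) \<le> 2 powr \<bar>a\<bar> * (1 + r\<^sup>2) powr (-a/2)"
proof (cases "r = 0")
  case False
  then have r_sq: "r powr (-a) = (r\<^sup>2) powr (-a/2)"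
    using assms(1) by (simp add: powr_powr flip: powr_numeral)
  show ?thesis
  proof (cases "a \<le> 0")
    case True
    have "(r\<^sup>2) powr (-a/2) \<le> (1 + r\<^sup>2) powr (-a/2)"
      using True by (intro powr_mono2) auto
    also have "\<dots> \<le> 2 powr \<bar>a\<bar> * (1 + r\<^sup>2) powr (-a/2)"
      using ge_one_powr_ge_zero[of 2 "\<bar>a\<bar>"] by (simp add: mult_le_cancel_right1)
    finally show ?thesis using r_sq by simp
  next
    case False
    then have "r \<ge> 1" and "a > 0" using assms by auto
    then have "(1 + r\<^sup>2) / 2 \<le> r\<^sup>2"
      using mult_mono[of 1 r 1 r] by (simp add: power2_eq_square)
    then have "(r\<^sup>2) powr (-a/2) \<le> ((1 + r\<^sup>2) / 2) powr (-a/2)"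
      using \<open>a > 0\<close> by (intro powr_mono2') (auto simp: add_pos_nonneg)
    also have "\<dots> = 2 powr (a/2) * (1 + r\<^sup>2) powr (-a/2)"
      by (simp add: powr_divide add_pos_nonneg powr_minus_divide)
    also have "\<dots> \<le> 2 powr \<bar>a\<bar> * (1 + r\<^sup>2) powr (-a/2)"
      using \<open>a > 0\<close> by (intro mult_right_mono powr_mono) auto
    finally show ?thesis using r_sq by simp
  qed
qed simp

lemma norm_powr_one_plus_square_le_prod_Basis:
  fixes x :: "'a::euclidean_space"
  assumes "0 < q" "0 \<le> a/2 + q" and nonzero: "\<forall>b\<in>Basis. x \<bullet> b \<noteq> 0"
  shows "norm x powr (-a) * (1 + (norm x)\<^sup>2) powr (-q)
    \<le> (\<Prod>b\<in>Basis. \<bar>x \<bullet> b\<bar> powr (-a / DIM('a)) * indicator {-1..1} (x \<bullet> b))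
      + 2 powr \<bar>a\<bar> * (\<Prod>b\<in>Basis. (1 + (x \<bullet> b)\<^sup>2) powr (-(a/2 + q) / DIM('a)))"
    (is "_ \<le> ?sing + 2 powr \<bar>a\<bar> * ?tail")
proof (cases "a > 0 \<and> norm x < 1")
  case True
  have "(1 + (norm x)\<^sup>2) powr (-q) \<le> 1"
    using \<open>0 < q\<close> by (intro powr_minus_le_one) auto
  then have "norm x powr (-a) * (1 + (norm x)\<^sup>2) powr (-q) \<le> norm x powr (-a)"
    by (simp add: mult_left_le)
  also have "\<dots> \<le> ?sing"
    using True nonzero by (intro norm_powr_le_prod_Basis) auto
  finally show ?thesis
    by (simp add: prod_nonneg add_increasing2)
next
  case False
  have "norm x powr (-a) * (1 + (norm x)\<^sup>2) powr (-q) \<le>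
      2 powr \<bar>a\<bar> * (1 + (norm x)\<^sup>2) powr (-a/2) * (1 + (norm x)\<^sup>2) powr (-q)"
    using False by (intro mult_right_mono powr_le_one_plus_square_powr) auto
  also have "\<dots> = 2 powr \<bar>a\<bar> * (1 + (norm x)\<^sup>2) powr (-(a/2 + q))"
    by (simp add: mult.assoc powr_add[symmetric])
  also have "\<dots> \<le> 2 powr \<bar>a\<bar> * ?tail"
    using one_plus_norm_square_powr_le_prod_Basis[OF \<open>0 \<le> a/2 + q\<close>, of x] by simp
  finally show ?thesis
    by (simp add: prod_nonneg add_increasing)
qed

lemma nn_integral_norm_powr_one_plus_finite:
  fixes a q :: real
  assumes a: "a < DIM('a::euclidean_space)" and q: "DIM('a) < a + 2 * q"
  shows "(\<integral>\<^sup>+x. ennreal (norm (x::'a) powr (-a) * (1 + (norm x)\<^sup>2) powr (-q)) \<partial>lborel) < \<infinity>"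
proof -
  define D where "D = real DIM('a)"
  define s where "s = a/2 + q"
  have "D > 0" "q > 0" "s \<ge> 0" "s / D > 1/2"
    using a q by (auto simp: D_def s_def field_simps)
  define sing where "sing x = (\<Prod>b\<in>(Basis::'a set). \<bar>x \<bullet> b\<bar> powr (-a/D) * indicator {-1..1} (x \<bullet> b))" for x
  define tail where "tail x = (\<Prod>b\<in>(Basis::'a set). (1 + (x \<bullet> b)\<^sup>2) powr (-s/D))" for x
  have [measurable]: "sing \<in> borel_measurable borel" "tail \<in> borel_measurable borel"
    unfolding sing_def tail_def by measurable
  have sing_integral: "(\<integral>\<^sup>+x. ennreal (sing x) \<partial>lborel) =
      (\<Prod>b\<in>(Basis::'a set). \<integral>\<^sup>+t. ennreal (\<bar>t\<bar> powr (-(a/D))) * indicator {-1..1} t \<partial>lborel)"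
    unfolding sing_def
    by (subst prod_ennreal[symmetric], simp, subst nn_integral_lborel_prod)
      (auto simp: ennreal_mult ennreal_indicator)
  have tail_integral: "(\<integral>\<^sup>+x. ennreal (tail x) \<partial>lborel) =
      (\<Prod>b\<in>(Basis::'a set). \<integral>\<^sup>+t. ennreal ((1 + t\<^sup>2) powr (-(s/D))) \<partial>lborel)"
    unfolding tail_def
    by (subst prod_ennreal[symmetric], simp, subst nn_integral_lborel_prod) auto
  have "(\<integral>\<^sup>+x. ennreal (norm (x::'a) powr (-a) * (1 + (norm x)\<^sup>2) powr (-q)) \<partial>lborel) \<le>
      (\<integral>\<^sup>+x. ennreal (sing x) + ennreal (2 powr \<bar>a\<bar>) * ennreal (tail x) \<partial>lborel)"
  proof (intro nn_integral_mono_AE, use AE_lborel_inner_Basis_nonzero in eventually_elim)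
    case (elim x)
    have "sing x \<ge> 0" "tail x \<ge> 0"
      by (auto simp: sing_def tail_def prod_nonneg)
    then show ?case
      using norm_powr_one_plus_square_le_prod_Basis[OF \<open>q > 0\<close> \<open>s \<ge> 0\<close>[unfolded s_def] elim]
      by (simp add: sing_def tail_def D_def s_def ennreal_mult[symmetric] ennreal_plus[symmetric] ennreal_leI
          del: ennreal_plus)
  qed
  also have "\<dots> = (\<integral>\<^sup>+x. ennreal (sing x) \<partial>lborel) + ennreal (2 powr \<bar>a\<bar>) * (\<integral>\<^sup>+x. ennreal (tail x) \<partial>lborel)"
    by (simp add: nn_integral_add nn_integral_cmult)
  also have "\<dots> < \<infinity>"
    unfolding sing_integral tail_integral
    using nn_integral_abs_powr_Icc_finite[of "a/D"] nn_integral_one_plus_square_powr_finite[of "s/D"]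
      \<open>s / D > 1/2\<close> a \<open>D > 0\<close>
    by (simp add: D_def less_top[symmetric] ennreal_mult_eq_top_iff power_eq_top_ennreal field_simps)
  finally show ?thesis .
qed

lemma one_plus_power_powr_le:
  fixes r C e :: real and \<gamma> :: nat
  assumes r: "r \<ge> 0" and C: "C > 0" and e: "e \<ge> 0"
  shows "(1 + C * r ^ \<gamma>) powr (-e) \<le> (2 ^ \<gamma> / min 1 C) powr e * (1 + r\<^sup>2) powr (-(\<gamma> * e / 2))"
proof -
  define M where "M = 2 ^ \<gamma> / min 1 C"
  have "M > 0" using C by (simp add: M_def)
  have "1 + r\<^sup>2 > 0" by (intro add_pos_nonneg) auto
  have "(1 + r\<^sup>2) powr (\<gamma> / 2) \<le> ((1 + r)\<^sup>2) powr (\<gamma> / 2)"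
    using r by (intro powr_mono2) (auto simp: power2_sum)
  also have "\<dots> = (1 + r) ^ \<gamma>"
    using r by (simp add: powr_powr powr_realpow flip: powr_numeral)
  also have "\<dots> \<le> (2 * max 1 r) ^ \<gamma>"
    using r by (intro power_mono) auto
  also have "\<dots> \<le> 2 ^ \<gamma> * (1 + r ^ \<gamma>)"
    using r by (auto simp: power_mult_distrib max_def)
  also have "\<dots> \<le> M * (1 + C * r ^ \<gamma>)"
  proof -
    have "min 1 C * (1 + r ^ \<gamma>) \<le> 1 + C * r ^ \<gamma>"
      using C r mult_right_mono[of 1 C "r ^ \<gamma>"] by (auto simp: min_def algebra_simps)
    then have "M * (min 1 C * (1 + r ^ \<gamma>)) \<le> M * (1 + C * r ^ \<gamma>)"
      using \<open>M > 0\<close> by (intro mult_left_mono) auto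
    moreover have "min 1 C > 0"
      using C by simp
    ultimately show ?thesis
      by (simp add: M_def)
  qed
  finally have "(1 + r\<^sup>2) powr (\<gamma> / 2) / M \<le> 1 + C * r ^ \<gamma>"
    using \<open>M > 0\<close> by (simp add: field_simps)
  then have "(1 + C * r ^ \<gamma>) powr (-e) \<le> ((1 + r\<^sup>2) powr (\<gamma> / 2) / M) powr (-e)"
    using e \<open>M > 0\<close> \<open>1 + r\<^sup>2 > 0\<close> by (intro powr_mono2') auto
  also have "\<dots> = M powr e * (1 + r\<^sup>2) powr (-(\<gamma> * e / 2))"
    using \<open>M > 0\<close> by (simp add: powr_divide powr_powr powr_minus_divide add_pos_nonneg)
  finally show ?thesis unfolding M_def .
qed

lemma nn_integral_norm_powr_decay_finite:
  fixes a e C :: real and \<gamma> :: nat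
  assumes a: "a < DIM('a::euclidean_space)" and e: "DIM('a) < a + \<gamma> * e" "0 \<le> e" and C: "C > 0"
  shows "(\<integral>\<^sup>+x. ennreal (norm (x::'a) powr (-a) * (1 + C * norm x ^ \<gamma>) powr (-e)) \<partial>lborel) < \<infinity>"
proof -
  define M where "M = (2 ^ \<gamma> / min 1 C) powr e"
  have "(\<integral>\<^sup>+x. ennreal (norm (x::'a) powr (-a) * (1 + C * norm x ^ \<gamma>) powr (-e)) \<partial>lborel) \<le>
      (\<integral>\<^sup>+x. ennreal M * ennreal (norm (x::'a) powr (-a) * (1 + (norm x)\<^sup>2) powr (-(\<gamma> * e / 2))) \<partial>lborel)"
    unfolding M_def using one_plus_power_powr_le[OF _ C e(2)]
    by (intro nn_integral_mono)
      (auto simp: ennreal_mult[symmetric] mult.left_commute intro!: ennreal_leI mult_left_mono)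
  also have "\<dots> < \<infinity>"
    using nn_integral_norm_powr_one_plus_finite[of a "\<gamma> * e / 2", where 'a='a] a e
    by (simp add: nn_integral_cmult ennreal_mult_less_top field_simps)
  finally show ?thesis .
qed

lemma nn_integral_lborel_scaleR:
  fixes f :: "'a::euclidean_space \<Rightarrow> ennreal"
  assumes c: "c > 0" and [measurable]: "f \<in> borel_measurable borel"
  shows "(\<integral>\<^sup>+x. f x \<partial>lborel) = ennreal (c ^ DIM('a)) * (\<integral>\<^sup>+x. f (c *\<^sub>R x) \<partial>lborel)"
proof -
  have "(\<integral>\<^sup>+x. f x \<partial>lborel) =
      (\<integral>\<^sup>+x. f x \<partial>density (distr lborel borel (\<lambda>x. 0 + c *\<^sub>R x)) (\<lambda>_. ennreal (\<bar>c\<bar> ^ DIM('a))))"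
    using lborel_affine[of c "0::'a"] c by simp
  also have "\<dots> = (\<integral>\<^sup>+x. ennreal (c ^ DIM('a)) * f (c *\<^sub>R x) \<partial>lborel)"
    using c by (simp add: nn_integral_density nn_integral_distr)
  finally show ?thesis
    by (simp add: nn_integral_cmult)
qed

lemma nn_integral_norm_powr_homogeneous:
  fixes a e C E :: real and \<gamma> :: nat
  assumes E: "E > 0" and C: "C > 0" and \<gamma>: "\<gamma> > 0"
  shows "(\<integral>\<^sup>+x. ennreal (norm (x::'a::euclidean_space) powr (-a) * (E + C * norm x ^ \<gamma>) powr (-e)) \<partial>lborel)
    = ennreal (E powr ((DIM('a) - a) / \<gamma> - e)) *
      (\<integral>\<^sup>+x. ennreal (norm (x::'a) powr (-a) * (1 + C * norm x ^ \<gamma>) powr (-e)) \<partial>lborel)"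
proof -
  define c where "c = E powr (1 / \<gamma>)"
  have "c > 0" using E by (simp add: c_def)
  have c_pow: "c ^ \<gamma> = E" "c ^ DIM('a) = E powr (DIM('a) / \<gamma>)"
    using E \<gamma> by (simp_all add: c_def powr_realpow[symmetric] powr_powr)
  have scaled: "norm (c *\<^sub>R x) powr (-a) * (E + C * norm (c *\<^sub>R x) ^ \<gamma>) powr (-e)
      = E powr (-a / \<gamma> - e) * (norm x powr (-a) * (1 + C * norm x ^ \<gamma>) powr (-e))" for x :: 'a
  proof -
    have "norm (c *\<^sub>R x) powr (-a) = E powr (-a / \<gamma>) * norm x powr (-a)"
      using \<open>c > 0\<close> E by (simp add: powr_mult c_def powr_powr)
    moreover have "(E + C * norm (c *\<^sub>R x) ^ \<gamma>) powr (-e) = E powr (-e) * (1 + C * norm x ^ \<gamma>) powr (-e)"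
      using \<open>c > 0\<close> E C
      by (simp add: power_mult_distrib c_pow algebra_simps flip: powr_mult)
    moreover have "E powr (-a / \<gamma> - e) = E powr (-a / \<gamma>) * E powr (-e)"
      by (simp add: powr_diff powr_minus_divide)
    ultimately show ?thesis
      by (simp only: mult_ac)
  qed
  have "(\<integral>\<^sup>+x. ennreal (norm (x::'a) powr (-a) * (E + C * norm x ^ \<gamma>) powr (-e)) \<partial>lborel)
     = ennreal (c ^ DIM('a)) *
       (\<integral>\<^sup>+x. ennreal (norm (c *\<^sub>R (x::'a)) powr (-a) * (E + C * norm (c *\<^sub>R x) ^ \<gamma>) powr (-e)) \<partial>lborel)"
    by (rule nn_integral_lborel_scaleR[OF \<open>c > 0\<close>,
          where f="\<lambda>x. ennreal (norm x powr (-a) * (E + C * norm x ^ \<gamma>) powr (-e))"]) measurable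
  also have "(\<integral>\<^sup>+x. ennreal (norm (c *\<^sub>R (x::'a)) powr (-a) *
        (E + C * norm (c *\<^sub>R x) ^ \<gamma>) powr (-e)) \<partial>lborel)
     = (\<integral>\<^sup>+x. ennreal (E powr (-a / \<gamma> - e)) *
         ennreal (norm (x::'a) powr (-a) * (1 + C * norm x ^ \<gamma>) powr (-e)) \<partial>lborel)"
    unfolding scaled by (intro nn_integral_cong ennreal_mult) auto
  also have "ennreal (c ^ DIM('a)) * (\<integral>\<^sup>+x. ennreal (E powr (-a / \<gamma> - e)) *
         ennreal (norm (x::'a) powr (-a) * (1 + C * norm x ^ \<gamma>) powr (-e)) \<partial>lborel)
     = ennreal (c ^ DIM('a) * E powr (-a / \<gamma> - e)) *
         (\<integral>\<^sup>+x. ennreal (norm (x::'a) powr (-a) * (1 + C * norm x ^ \<gamma>) powr (-e)) \<partial>lborel)"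
    using \<open>c > 0\<close> E by (simp add: nn_integral_cmult ennreal_mult' mult.assoc)
  also have "c ^ DIM('a) * E powr (-a / \<gamma> - e) = E powr ((DIM('a) - a) / \<gamma> - e)"
    using E by (simp add: c_pow powr_add[symmetric] diff_divide_distrib algebra_simps)
  finally show ?thesis .
qed

lemma square_powr_weight_le:
  fixes x :: "'a::real_normed_vector" and C E e e0 :: real
  assumes y: "\<bar>y\<bar> \<le> C * norm x powr (-\<alpha>)" and w: "C * norm x ^ \<gamma> \<le> w"
    and "0 < C" "0 < E" "e0 \<le> e" "0 \<le> e0" "x \<noteq> 0"
  shows "\<bar>y\<bar>\<^sup>2 * (E + w) powr (-e)
    \<le> (C\<^sup>2 * E powr (e0 - e)) * (norm x powr (-(2 * \<alpha>)) * (E + C * norm x ^ \<gamma>) powr (-e0))"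
proof -
  have "\<bar>y\<bar>\<^sup>2 \<le> (C * norm x powr (-\<alpha>))\<^sup>2"
    using y by (intro power_mono) auto
  also have "\<dots> = C\<^sup>2 * norm x powr (-(2 * \<alpha>))"
    using \<open>x \<noteq> 0\<close> by (simp add: power_mult_distrib powr_realpow[symmetric] powr_powr mult.commute)
  finally have y_sq: "\<bar>y\<bar>\<^sup>2 \<le> C\<^sup>2 * norm x powr (-(2 * \<alpha>))" .
  have "0 \<le> C * norm x ^ \<gamma>"
    using \<open>0 < C\<close> by simp
  then have "0 < E + C * norm x ^ \<gamma>" "0 \<le> w"
    using w \<open>0 < E\<close> by linarith+
  then have "(E + w) powr (-e) = (E + w) powr (-e0) * (E + w) powr (e0 - e)"
    using \<open>0 < E\<close> by (simp add: powr_add[symmetric])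
  also have "\<dots> \<le> (E + C * norm x ^ \<gamma>) powr (-e0) * E powr (e0 - e)"
    using \<open>0 < E + C * norm x ^ \<gamma>\<close> \<open>0 \<le> w\<close> w assms by (intro mult_mono powr_mono2') auto
  finally show ?thesis
    using y_sq by (intro order_trans[OF mult_mono[OF y_sq]]) (auto simp: mult_ac)
qed

lemma nn_integral_square_powr_weight_le:
  fixes v \<omega> :: "'a::euclidean_space \<Rightarrow> real" and \<alpha> C e0 :: real and \<gamma> :: nat
  assumes [measurable]: "v \<in> borel_measurable borel" "\<omega> \<in> borel_measurable borel"
    and C: "C > 0" and \<gamma>: "\<gamma> > 0" and \<alpha>: "2 * \<alpha> < DIM('a)" and e0: "(DIM('a) - 2 * \<alpha>) / \<gamma> < e0"
    and \<omega>_lower: "\<And>k. C * norm k ^ \<gamma> \<le> \<omega> k"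
    and v_bound: "\<And>k. k \<noteq> 0 \<Longrightarrow> \<bar>v k\<bar> \<le> C * norm k powr (-\<alpha>)"
  shows "\<exists>K\<ge>0. \<forall>E>0. \<forall>e\<ge>e0. (\<integral>\<^sup>+x. ennreal (\<bar>v x\<bar>\<^sup>2 * (E + \<omega> x) powr (-e)) \<partial>lborel)
            \<le> ennreal (K * E powr ((DIM('a) - 2 * \<alpha>) / \<gamma> - e))"
proof -
  let ?h = "\<lambda>E x. norm (x::'a) powr (-(2 * \<alpha>)) * (E + C * norm x ^ \<gamma>) powr (-e0)"
  define G where "G = (\<integral>\<^sup>+x. ennreal (?h 1 x) \<partial>lborel)"
  have "e0 > 0"
    using \<alpha> \<gamma> e0 by (smt (verit) divide_pos_pos of_nat_0_less_iff)
  then have "G < \<infinity>"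
    using \<alpha> \<gamma> e0 C unfolding G_def by (intro nn_integral_norm_powr_decay_finite) (auto simp: field_simps)
  define K where "K = C\<^sup>2 * enn2real G"
  show ?thesis
  proof (intro exI[of _ K] conjI allI impI)
    show "K \<ge> 0" by (simp add: K_def)
    fix E e :: real assume "E > 0" "e \<ge> e0"
    have pointwise: "\<bar>v x\<bar>\<^sup>2 * (E + \<omega> x) powr (-e) \<le> (C\<^sup>2 * E powr (e0 - e)) * ?h E x" if "x \<noteq> 0" for x
      using square_powr_weight_le[OF v_bound[OF that] \<omega>_lower C \<open>E > 0\<close> \<open>e0 \<le> e\<close>] \<open>e0 > 0\<close> that
      by simp
    have "(\<integral>\<^sup>+x. ennreal (\<bar>v x\<bar>\<^sup>2 * (E + \<omega> x) powr (-e)) \<partial>lborel) \<le>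
        (\<integral>\<^sup>+x. ennreal (C\<^sup>2 * E powr (e0 - e)) * ennreal (?h E x) \<partial>lborel)"
    proof (intro nn_integral_mono_AE, use AE_lborel_singleton[of 0] in eventually_elim)
      case (elim x)
      then show ?case
        using pointwise[OF elim] by (subst ennreal_mult'[symmetric]) (auto intro: ennreal_leI)
    qed
    also have "\<dots> = ennreal (C\<^sup>2 * E powr (e0 - e)) * (\<integral>\<^sup>+x. ennreal (?h E x) \<partial>lborel)"
      by (rule nn_integral_cmult) measurable
    also have "(\<integral>\<^sup>+x. ennreal (?h E x) \<partial>lborel) = ennreal (E powr ((DIM('a) - 2 * \<alpha>) / \<gamma> - e0) * enn2real G)"
      unfolding nn_integral_norm_powr_homogeneous[OF \<open>E > 0\<close> C \<gamma>] G_def[symmetric]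
      using \<open>G < \<infinity>\<close> by (simp add: ennreal_mult)
    also have "ennreal (C\<^sup>2 * E powr (e0 - e)) * \<dots>
        = ennreal (K * (E powr (e0 - e) * E powr ((DIM('a) - 2 * \<alpha>) / \<gamma> - e0)))"
      by (simp add: K_def ennreal_mult[symmetric] mult_ac)
    also have "E powr (e0 - e) * E powr ((DIM('a) - 2 * \<alpha>) / \<gamma> - e0) = E powr ((DIM('a) - 2 * \<alpha>) / \<gamma> - e)"
      by (simp add: powr_add[symmetric])
    finally show "(\<integral>\<^sup>+x. ennreal (\<bar>v x\<bar>\<^sup>2 * (E + \<omega> x) powr (-e)) \<partial>lborel)
        \<le> ennreal (K * E powr ((DIM('a) - 2 * \<alpha>) / \<gamma> - e))" .
  qed
qed

lemma norm_integral_le_nn_integral: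
  fixes f :: "'a \<Rightarrow> 'b::{banach, second_countable_topology}"
  shows "ennreal (norm (integral\<^sup>L M f)) \<le> (\<integral>\<^sup>+x. ennreal (norm (f x)) \<partial>M)"
  by (cases "integrable M f") (simp_all add: integral_norm_bound_ennreal not_integrable_integral_eq)

lemma nn_integral_Rnd_prod:
  assumes "\<And>k. k < n \<Longrightarrow> f k \<in> borel_measurable borel"
  shows "(\<integral>\<^sup>+\<Xi>. (\<Prod>k<n. f k (\<Xi> k)) \<partial>Rnd n) = (\<Prod>k<n. \<integral>\<^sup>+x. f k (x::real^'d::finite) \<partial>lborel)"
proof -
  interpret product_sigma_finite "\<lambda>_::nat. lborel :: (real^'d) measure"
    by (simp add: product_sigma_finite_def sigma_finite_lborel)
  show ?thesis
    unfolding Rnd_def using assms by (intro product_nn_integral_prod) auto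
qed

section \<open>Pointwise bounds for the weights\<close>

lemma inverse_le_powr_interpolation:
  fixes a b S \<beta> :: real
  assumes "0 < a" "a \<le> S" "0 < b" "b \<le> S" "0 \<le> \<beta>" "\<beta> \<le> 1"
  shows "1 / S \<le> a powr (-(1 - \<beta>)) * b powr (-\<beta>)"
proof -
  have "1 / S = S powr (-(1 - \<beta>)) * S powr (-\<beta>)"
    using assms by (simp add: powr_add[symmetric] powr_neg_one)
  also have "\<dots> \<le> a powr (-(1 - \<beta>)) * b powr (-\<beta>)"
    using assms by (intro mult_mono powr_mono2') auto
  finally show ?thesis .
qed

lemma rho_nonneg: "0 < E \<Longrightarrow> (\<And>x. 0 \<le> \<omega> x) \<Longrightarrow> 0 \<le> rho v \<omega> n l Q E"
  unfolding rho_def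
  by (intro mult_nonneg_nonneg prod_nonneg divide_nonneg_nonneg add_nonneg_nonneg sum_nonneg)
    (auto simp: less_imp_le)

lemma rho_tilde_nonneg: "0 < E \<Longrightarrow> (\<And>x. 0 \<le> \<omega> x) \<Longrightarrow> 0 \<le> rho_tilde v \<omega> n l R E"
  unfolding rho_tilde_def
  by (intro mult_nonneg_nonneg prod_nonneg divide_nonneg_nonneg add_nonneg_nonneg sum_nonneg)
    (auto simp: less_imp_le)

(* Interpolating each denominator between its first and its last summand moves a beta-share of
   every factor onto the last variable. *)
lemma rho_le_prod:
  fixes v \<omega> :: "real^'d::finite \<Rightarrow> real" and \<beta> :: real
  assumes E: "E > 0" and \<omega>: "\<And>x. \<omega> x \<ge> 0" and \<beta>: "0 \<le> \<beta>" "\<beta> \<le> 1"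
  shows "rho v \<omega> (Suc n) l U E \<le>
    (\<Prod>k<Suc n. \<bar>v (U k)\<bar> * (E + \<omega> (U k)) powr (-(if k = n then (1 + l)/2 + real n * \<beta> else 1 - \<beta>)))"
proof -
  let ?w = "\<lambda>x. E + \<omega> x"
  have w_pos: "?w x > 0" and w_ne: "?w x \<noteq> 0" for x
    using E \<omega>[of x] by simp_all
  have factor: "\<bar>v (U j)\<bar> / (E + (\<Sum>i=j..n. \<omega> (U i)))
      \<le> \<bar>v (U j)\<bar> * (?w (U j) powr (-(1 - \<beta>)) * ?w (U n) powr (-\<beta>))"
    if "j < n" for j
  proof -
    have "1 / (E + (\<Sum>i=j..n. \<omega> (U i))) \<le> ?w (U j) powr (-(1 - \<beta>)) * ?w (U n) powr (-\<beta>)"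
      using that \<omega> w_pos \<beta> by (intro inverse_le_powr_interpolation) (auto intro!: member_le_sum)
    then show ?thesis
      by (metis abs_ge_zero mult_left_mono times_divide_eq_right mult_1_right)
  qed
  have "(\<Prod>j<n. \<bar>v (U j)\<bar> / (E + (\<Sum>i=j..n. \<omega> (U i)))) \<le>
      (\<Prod>j<n. \<bar>v (U j)\<bar> * (?w (U j) powr (-(1 - \<beta>)) * ?w (U n) powr (-\<beta>)))"
    using E \<omega> by (intro prod_mono conjI factor divide_nonneg_nonneg add_nonneg_nonneg sum_nonneg)
      (auto simp: less_imp_le)
  also have "\<dots> = (\<Prod>j<n. \<bar>v (U j)\<bar> * ?w (U j) powr (-(1 - \<beta>))) * ?w (U n) powr (-(real n * \<beta>))"
    by (simp add: prod.distrib powr_power w_ne mult.assoc mult.commute[of _ "real n"])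
  finally have prefix: "(\<Prod>j<n. \<bar>v (U j)\<bar> / (E + (\<Sum>i=j..n. \<omega> (U i)))) \<le>
      (\<Prod>j<n. \<bar>v (U j)\<bar> * ?w (U j) powr (-(1 - \<beta>))) * ?w (U n) powr (-(real n * \<beta>))" .
  have "rho v \<omega> (Suc n) l U E =
      (\<Prod>j<n. \<bar>v (U j)\<bar> / (E + (\<Sum>i=j..n. \<omega> (U i)))) * (\<bar>v (U n)\<bar> * ?w (U n) powr (-((1 + l) / 2)))"
    by (simp add: rho_def powr_minus_divide)
  also have "\<dots> \<le> (\<Prod>j<n. \<bar>v (U j)\<bar> * ?w (U j) powr (-(1 - \<beta>))) * ?w (U n) powr (-(real n * \<beta>)) *
      (\<bar>v (U n)\<bar> * ?w (U n) powr (-((1 + l) / 2)))"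
    by (intro mult_right_mono prefix) auto
  also have "\<dots> = (\<Prod>k<Suc n. \<bar>v (U k)\<bar> * ?w (U k) powr (-(if k = n then (1 + l)/2 + real n * \<beta> else 1 - \<beta>)))"
    by (simp add: powr_add[symmetric] mult_ac add_ac)
  finally show ?thesis .
qed

lemma rho_tilde_le_prod:
  fixes v \<omega> :: "real^'d::finite \<Rightarrow> real" and \<beta> :: real
  assumes E: "E > 0" and \<omega>: "\<And>x. \<omega> x \<ge> 0" and \<beta>: "0 \<le> \<beta>" "\<beta> \<le> 1"
  shows "rho_tilde v \<omega> (Suc n) l R E \<le>
    (\<Prod>k<Suc n. \<bar>v (R k)\<bar> * (E + \<omega> (R k)) powr (-(if k = 0 then (1 + l)/2 + real n * \<beta> else 1 - \<beta>)))"
proof -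
  let ?w = "\<lambda>x. E + \<omega> x"
  have w_pos: "?w x > 0" and w_ne: "?w x \<noteq> 0" for x
    using E \<omega>[of x] by simp_all
  have factor: "\<bar>v (R j)\<bar> / (E + (\<Sum>i=0..j. \<omega> (R i)))
      \<le> \<bar>v (R j)\<bar> * (?w (R j) powr (-(1 - \<beta>)) * ?w (R 0) powr (-\<beta>))"
    for j
  proof -
    have "1 / (E + (\<Sum>i=0..j. \<omega> (R i))) \<le> ?w (R j) powr (-(1 - \<beta>)) * ?w (R 0) powr (-\<beta>)"
      using \<omega> w_pos \<beta> by (intro inverse_le_powr_interpolation) (auto intro!: member_le_sum)
    then show ?thesis
      by (metis abs_ge_zero mult_left_mono times_divide_eq_right mult_1_right)
  qed
  have "(\<Prod>j\<in>{1..<Suc n}. \<bar>v (R j)\<bar> / (E + (\<Sum>i=0..j. \<omega> (R i)))) \<le>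
      (\<Prod>j\<in>{1..<Suc n}. \<bar>v (R j)\<bar> * (?w (R j) powr (-(1 - \<beta>)) * ?w (R 0) powr (-\<beta>)))"
    using E \<omega> by (intro prod_mono conjI factor divide_nonneg_nonneg add_nonneg_nonneg sum_nonneg)
      (auto simp: less_imp_le)
  also have "\<dots> = (\<Prod>j\<in>{1..<Suc n}. \<bar>v (R j)\<bar> * ?w (R j) powr (-(1 - \<beta>))) * ?w (R 0) powr (-(real n * \<beta>))"
    by (simp add: prod.distrib powr_power w_ne mult.assoc mult.commute[of _ "real n"])
  finally have suffix: "(\<Prod>j\<in>{1..<Suc n}. \<bar>v (R j)\<bar> / (E + (\<Sum>i=0..j. \<omega> (R i)))) \<le>
      (\<Prod>j\<in>{1..<Suc n}. \<bar>v (R j)\<bar> * ?w (R j) powr (-(1 - \<beta>))) * ?w (R 0) powr (-(real n * \<beta>))" .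
  have "rho_tilde v \<omega> (Suc n) l R E =
      (\<bar>v (R 0)\<bar> * ?w (R 0) powr (-((1 + l) / 2))) * (\<Prod>j\<in>{1..<Suc n}. \<bar>v (R j)\<bar> / (E + (\<Sum>i=0..j. \<omega> (R i))))"
    by (simp add: rho_tilde_def powr_minus_divide)
  also have "\<dots> \<le> (\<bar>v (R 0)\<bar> * ?w (R 0) powr (-((1 + l) / 2))) *
      ((\<Prod>j\<in>{1..<Suc n}. \<bar>v (R j)\<bar> * ?w (R j) powr (-(1 - \<beta>))) * ?w (R 0) powr (-(real n * \<beta>)))"
    by (intro mult_left_mono suffix) auto
  also have "\<dots> = (\<Prod>k\<in>insert 0 {1..<Suc n}.
      \<bar>v (R k)\<bar> * ?w (R k) powr (-(if k = 0 then (1 + l)/2 + real n * \<beta> else 1 - \<beta>)))"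
    by (simp add: powr_add[symmetric] mult_ac add_ac)
  also have "insert 0 {1..<Suc n} = {..<Suc n}"
    by auto
  finally show ?thesis .
qed

lemma rho_permuted_le_prod:
  fixes v \<omega> :: "real^'d::finite \<Rightarrow> real" and \<beta> :: real
  assumes J: "J permutes {..<Suc n}" and E: "E > 0" and \<omega>: "\<And>x. \<omega> x \<ge> 0" and \<beta>: "0 \<le> \<beta>" "\<beta> \<le> 1"
  shows "rho v \<omega> (Suc n) l (\<lambda>k. \<Xi> (inv J k)) E \<le>
    (\<Prod>k<Suc n. \<bar>v (\<Xi> k)\<bar> * (E + \<omega> (\<Xi> k)) powr (-(if J k = n then (1 + l)/2 + real n * \<beta> else 1 - \<beta>)))"
proof -
  let ?f = "\<lambda>k m. \<bar>v (\<Xi> k)\<bar> * (E + \<omega> (\<Xi> k)) powr (-(if m = n then (1 + l)/2 + real n * \<beta> else 1 - \<beta>))"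
  have "rho v \<omega> (Suc n) l (\<lambda>k. \<Xi> (inv J k)) E \<le> (\<Prod>m<Suc n. ?f (inv J m) m)"
    by (rule rho_le_prod[OF E \<omega> \<beta>])
  also have "\<dots> = (\<Prod>k<Suc n. ?f (inv J (J k)) (J k))"
    by (rule prod.reindex_bij_betw[symmetric]) (rule permutes_imp_bij[OF J])
  also have "\<dots> = (\<Prod>k<Suc n. ?f k (J k))"
    by (simp add: permutes_inverses[OF J])
  finally show ?thesis .
qed

lemma resolvent_le_prod:
  fixes \<omega> :: "real^'d::finite \<Rightarrow> real" and \<Xi> :: "nat \<Rightarrow> real^'d"
  assumes E: "E > 0" and \<omega>: "\<And>x. \<omega> x \<ge> 0" and "\<Omega>p \<ge> 0" and "j < n" and r: "0 \<le> r" "r \<le> 1"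
  shows "1 / (\<Omega>p + E + (\<Sum>i<n. \<omega> (\<Xi> i))) \<le>
    (\<Prod>k<n. (E + \<omega> (\<Xi> k)) powr (-((if k = 0 then r else 0) + (if k = j then 1 - r else 0))))"
proof -
  let ?w = "\<lambda>x. E + \<omega> x"
  have w_pos: "?w x > 0" and w_ne: "?w x \<noteq> 0" for x
    using E \<omega>[of x] by simp_all
  have "1 / (\<Omega>p + E + (\<Sum>i<n. \<omega> (\<Xi> i))) \<le> 1 / (E + (\<Sum>i<n. \<omega> (\<Xi> i)))"
  proof -
    have "0 < E + (\<Sum>i<n. \<omega> (\<Xi> i))"
      using E \<omega> by (intro add_pos_nonneg sum_nonneg) auto
    then show ?thesis
      using \<open>\<Omega>p \<ge> 0\<close> by (intro divide_left_mono mult_pos_pos) auto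
  qed
  also have "\<dots> \<le> ?w (\<Xi> 0) powr (-(1 - (1 - r))) * ?w (\<Xi> j) powr (-(1 - r))"
    using \<omega> w_pos r \<open>j < n\<close> by (intro inverse_le_powr_interpolation) (auto intro!: member_le_sum)
  also have "\<dots> = (\<Prod>k<n. (if k = 0 then ?w (\<Xi> k) powr (-r) else 1) *
      (if k = j then ?w (\<Xi> k) powr (-(1 - r)) else 1))"
    using \<open>j < n\<close> w_ne by (simp add: prod.distrib)
  also have "\<dots> = (\<Prod>k<n. ?w (\<Xi> k) powr (-((if k = 0 then r else 0) + (if k = j then 1 - r else 0))))"
    by (intro prod.cong refl) (auto simp: powr_add[symmetric] w_ne)
  finally show ?thesis .
qed

lemma le_mult_INF:
  fixes f :: "'a \<Rightarrow> real"
  assumes "I \<noteq> {}" "0 \<le> c" "\<And>t. t \<in> I \<Longrightarrow> x \<le> c * f t"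
  shows "x \<le> c * (INF t\<in>I. f t)"
proof (cases "c = 0")
  case True
  then show ?thesis using assms by auto
next
  case False
  then have "x / c \<le> (INF t\<in>I. f t)"
    using assms by (intro cINF_greatest) (auto simp: divide_le_eq mult.commute)
  then show ?thesis
    using False assms(2) by (simp add: divide_le_eq mult.commute)
qed

lemma INF_rho_rho_tilde_bounds:
  assumes "0 < E" "\<And>x. 0 \<le> \<omega> x" "s \<in> I"
  shows "0 \<le> (INF s\<in>I. rho v \<omega> n (l + s) Q E * rho_tilde v \<omega> n (l - s) R E)"
    and "(INF s\<in>I. rho v \<omega> n (l + s) Q E * rho_tilde v \<omega> n (l - s) R E)
      \<le> rho v \<omega> n (l + s) Q E * rho_tilde v \<omega> n (l - s) R E"
proof -
  have "0 \<le> rho v \<omega> n (l + s) Q E * rho_tilde v \<omega> n (l - s) R E" for s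
    using assms by (intro mult_nonneg_nonneg rho_nonneg rho_tilde_nonneg) auto
  then show "0 \<le> (INF s\<in>I. rho v \<omega> n (l + s) Q E * rho_tilde v \<omega> n (l - s) R E)"
    and "(INF s\<in>I. rho v \<omega> n (l + s) Q E * rho_tilde v \<omega> n (l - s) R E)
      \<le> rho v \<omega> n (l + s) Q E * rho_tilde v \<omega> n (l - s) R E"
    using \<open>s \<in> I\<close> by (auto intro!: cINF_greatest cINF_lower bdd_belowI[of _ 0])
qed

lemma kernel_bound_pointwise:
  fixes \<kappa> :: "'d::finite kernel"
  assumes bound: "\<exists>c. \<forall>Q R p E. E \<ge> 1 \<longrightarrow> cmod (\<kappa> Q R p E) \<le>
      c * E powr (-\<mu>) * (INF s\<in>{l-1..1-l}. rho v \<omega> n (l + s) Q E * rho_tilde v \<omega> n (l - s) R E)"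
    and \<omega>: "\<And>x. 0 \<le> \<omega> x"
  obtains c where "0 \<le> c" "\<And>Q R p E s. 1 \<le> E \<Longrightarrow> s \<in> {l-1..1-l} \<Longrightarrow>
      cmod (\<kappa> Q R p E) \<le> c * E powr (-\<mu>) * (rho v \<omega> n (l + s) Q E * rho_tilde v \<omega> n (l - s) R E)"
proof -
  obtain c where c: "\<forall>Q R p E. E \<ge> 1 \<longrightarrow> cmod (\<kappa> Q R p E) \<le>
      c * E powr (-\<mu>) * (INF s\<in>{l-1..1-l}. rho v \<omega> n (l + s) Q E * rho_tilde v \<omega> n (l - s) R E)"
    using bound by blast
  have "cmod (\<kappa> Q R p E) \<le> max c 0 * E powr (-\<mu>) * (rho v \<omega> n (l + s) Q E * rho_tilde v \<omega> n (l - s) R E)"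
    if E: "1 \<le> E" and s: "s \<in> {l-1..1-l}" for Q R p E s
  proof -
    let ?F = "\<lambda>s. rho v \<omega> n (l + s) Q E * rho_tilde v \<omega> n (l - s) R E"
    have "0 \<le> (INF s\<in>{l-1..1-l}. ?F s)" "(INF s\<in>{l-1..1-l}. ?F s) \<le> ?F s"
      using INF_rho_rho_tilde_bounds[where \<omega>=\<omega>, OF _ \<omega> s] E by auto
    have "cmod (\<kappa> Q R p E) \<le> c * E powr (-\<mu>) * (INF s\<in>{l-1..1-l}. ?F s)"
      using c E by blast
    also have "\<dots> \<le> max c 0 * E powr (-\<mu>) * (INF s\<in>{l-1..1-l}. ?F s)"
      using \<open>0 \<le> (INF s\<in>{l-1..1-l}. ?F s)\<close> by (intro mult_right_mono) auto
    also have "\<dots> \<le> max c 0 * E powr (-\<mu>) * ?F s"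
      using \<open>(INF s\<in>{l-1..1-l}. ?F s) \<le> ?F s\<close> by (intro mult_left_mono) auto
    finally show ?thesis .
  qed
  then show ?thesis
    using that[of "max c 0"] by auto
qed

section \<open>Distributing the exponents\<close>

(* The exponent of E + omega(xi_k) collected from rho~_a(Xi), from rho_b(Xi o J^-1), whose last
   variable is the xi_k with J k = n, and from the resolvent, split with weights r and 1 - r between
   xi_0 and that variable. *)
definition contraction_exponent :: "nat \<Rightarrow> real \<Rightarrow> real \<Rightarrow> real \<Rightarrow> real \<Rightarrow> (nat \<Rightarrow> nat) \<Rightarrow> nat \<Rightarrow> real" where
  "contraction_exponent n a b \<beta> r J k =
     (if k = 0 then (1 + a)/2 + real n * \<beta> else 1 - \<beta>) +
     (if J k = n then (1 + b)/2 + real n * \<beta> else 1 - \<beta>) +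
     ((if k = 0 then r else 0) + (if J k = n then 1 - r else 0))"

lemma sum_contraction_exponent:
  assumes J: "J permutes {..<Suc n}"
  shows "(\<Sum>k<Suc n. contraction_exponent n a b \<beta> r J k) = (a + b)/2 + 2 * real (Suc n)"
proof -
  have reindex: "(\<Sum>k<Suc n. f (J k)) = (\<Sum>k<Suc n. f k)" for f :: "nat \<Rightarrow> real"
    using permutes_imp_bij[OF J] by (rule sum.reindex_bij_betw)
  have s1: "(\<Sum>k<Suc n. (if k = 0 then (1 + a)/2 + real n * \<beta> else 1 - \<beta>)) = (1 + a)/2 + real n"
    by (subst sum.lessThan_Suc_shift) (simp add: algebra_simps)
  have s2: "(\<Sum>k<Suc n. (if J k = n then (1 + b)/2 + real n * \<beta> else 1 - \<beta>)) = (1 + b)/2 + real n"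
    using reindex[of "\<lambda>m. if m = n then (1 + b)/2 + real n * \<beta> else 1 - \<beta>"]
    by (simp add: algebra_simps)
  have s3: "(\<Sum>k<Suc n. (if k = 0 then r else 0)) = r"
    by simp
  have s4: "(\<Sum>k<Suc n. (if J k = n then 1 - r else 0)) = 1 - r"
    using reindex[of "\<lambda>m. if m = n then 1 - r else 0"] by simp
  show ?thesis
    unfolding contraction_exponent_def sum.distrib s1 s2 s3 s4 by (simp add: field_simps)
qed

(* The choice of r makes the two exponents equal when xi_0 is not the last variable of rho_b. *)
lemma contraction_exponent_ge:
  fixes a b \<theta> \<eta> :: real
  assumes "0 < \<eta>" and "4 * real (Suc n) * \<eta> \<le> (a + b)/2 + real (Suc n) * (1 - \<theta>)"
  shows "1 + \<theta> + \<eta> \<le> contraction_exponent n a b ((1 - \<theta>)/2 - \<eta>) ((2 + b - a)/4) J k"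
proof -
  define N where "N = real n * \<eta>"
  define X where "X = real n * (1 - \<theta>)"
  have \<beta>: "real n * ((1 - \<theta>)/2 - \<eta>) = X/2 - N"
    by (simp add: X_def N_def algebra_simps)
  have "0 \<le> N" "4 * N + 4 * \<eta> \<le> (a + b)/2 + X + (1 - \<theta>)"
    using assms by (simp_all add: N_def X_def algebra_simps)
  then show ?thesis
    using \<open>0 < \<eta>\<close> unfolding contraction_exponent_def \<beta>
    by (cases "k = 0"; cases "J k = n") (simp_all add: field_simps)
qed

lemma rho_tilde_rho_resolvent_le_prod:
  fixes v \<omega> :: "real^'d::finite \<Rightarrow> real" and \<Xi> :: "nat \<Rightarrow> real^'d"
  assumes J: "J permutes {..<Suc n}" and E: "E > 0" and \<omega>: "\<And>x. \<omega> x \<ge> 0" and "\<Omega>p \<ge> 0"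
    and \<beta>: "0 \<le> \<beta>" "\<beta> \<le> 1" and r: "0 \<le> r" "r \<le> 1"
  shows "rho_tilde v \<omega> (Suc n) a \<Xi> E * rho v \<omega> (Suc n) b (\<lambda>k. \<Xi> (inv J k)) E / (\<Omega>p + E + (\<Sum>i<Suc n. \<omega> (\<Xi> i)))
    \<le> (\<Prod>k<Suc n. \<bar>v (\<Xi> k)\<bar>\<^sup>2 * (E + \<omega> (\<Xi> k)) powr (-(contraction_exponent n a b \<beta> r J k)))"
proof -
  let ?w = "\<lambda>x. E + \<omega> x"
  define T1 where
    "T1 k = \<bar>v (\<Xi> k)\<bar> * ?w (\<Xi> k) powr (-(if k = 0 then (1 + a)/2 + real n * \<beta> else 1 - \<beta>))" for k
  define T2 where
    "T2 k = \<bar>v (\<Xi> k)\<bar> * ?w (\<Xi> k) powr (-(if J k = n then (1 + b)/2 + real n * \<beta> else 1 - \<beta>))" for k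
  define T3 where
    "T3 k = ?w (\<Xi> k) powr (-((if k = 0 then r else 0) + (if J k = n then 1 - r else 0)))" for k
  have rho_le: "rho v \<omega> (Suc n) b (\<lambda>k. \<Xi> (inv J k)) E \<le> (\<Prod>k<Suc n. T2 k)"
    unfolding T2_def by (rule rho_permuted_le_prod[OF J E \<omega> \<beta>])
  have "inv J n < Suc n"
    using permutes_in_image[OF permutes_inv[OF J], of n] by simp
  then have "1 / (\<Omega>p + E + (\<Sum>i<Suc n. \<omega> (\<Xi> i))) \<le>
      (\<Prod>k<Suc n. ?w (\<Xi> k) powr (-((if k = 0 then r else 0) + (if k = inv J n then 1 - r else 0))))"
    by (rule resolvent_le_prod[OF E \<omega> \<open>\<Omega>p \<ge> 0\<close> _ r])
  also have "\<dots> = (\<Prod>k<Suc n. T3 k)"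
    unfolding T3_def by (simp add: eq_commute[of _ "inv J n"] permutes_inv_eq[OF J])
  finally have resolvent_le: "1 / (\<Omega>p + E + (\<Sum>i<Suc n. \<omega> (\<Xi> i))) \<le> (\<Prod>k<Suc n. T3 k)" .
  have "0 \<le> (\<Prod>k<Suc n. T1 k)" "0 \<le> (\<Prod>k<Suc n. T2 k)"
    by (simp_all add: T1_def T2_def prod_nonneg)
  moreover have "0 \<le> 1 / (\<Omega>p + E + (\<Sum>i<Suc n. \<omega> (\<Xi> i)))"
    using E \<omega> \<open>\<Omega>p \<ge> 0\<close> by (intro divide_nonneg_nonneg add_nonneg_nonneg sum_nonneg) auto
  ultimately have "rho_tilde v \<omega> (Suc n) a \<Xi> E * rho v \<omega> (Suc n) b (\<lambda>k. \<Xi> (inv J k)) E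
        * (1 / (\<Omega>p + E + (\<Sum>i<Suc n. \<omega> (\<Xi> i))))
      \<le> (\<Prod>k<Suc n. T1 k) * (\<Prod>k<Suc n. T2 k) * (\<Prod>k<Suc n. T3 k)"
    using rho_tilde_le_prod[OF E \<omega> \<beta>, where v=v and n=n and l=a and R=\<Xi>] rho_le resolvent_le
      rho_tilde_nonneg[OF E \<omega>] rho_nonneg[OF E \<omega>]
    unfolding T1_def by (intro mult_mono) (auto intro: mult_nonneg_nonneg)
  also have "\<dots> = (\<Prod>k<Suc n. \<bar>v (\<Xi> k)\<bar>\<^sup>2 * ?w (\<Xi> k) powr (-(contraction_exponent n a b \<beta> r J k)))"
    unfolding prod.distrib[symmetric] T1_def T2_def T3_def contraction_exponent_def
    by (intro prod.cong refl) (simp add: powr_add[symmetric] power2_eq_square algebra_simps)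
  finally show ?thesis
    by simp
qed

section \<open>The contraction estimate\<close>

lemma standing_assumptions_bounds:
  assumes "standing_assumptions v \<omega> \<Omega> \<alpha> \<gamma>"
  obtains C where "0 < C" "\<And>k. k \<noteq> 0 \<Longrightarrow> \<bar>v k\<bar> \<le> C * norm k powr (-\<alpha>)" "\<And>k. C * norm k ^ \<gamma> \<le> \<omega> k"
proof -
  obtain C cb where C: "0 < C" "0 < cb"
    and v: "\<forall>k. (k \<noteq> 0 \<or> \<alpha> \<le> 0) \<longrightarrow> \<bar>v k\<bar> \<le> C * (if k = 0 \<and> \<alpha> = 0 then 1 else norm k powr (-\<alpha>))"
    and \<omega>: "\<forall>k. C * sqrt (cb + (norm k)\<^sup>2) ^ \<gamma> \<le> \<omega> k"
    using assms unfolding standing_assumptions_def by blast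
  have "\<bar>v k\<bar> \<le> C * norm k powr (-\<alpha>)" if "k \<noteq> 0" for k
    using v that by auto
  moreover have "C * norm k ^ \<gamma> \<le> \<omega> k" for k
  proof -
    have "norm k \<le> sqrt (cb + (norm k)\<^sup>2)"
      using C by (intro real_le_rsqrt) auto
    then have "C * norm k ^ \<gamma> \<le> C * sqrt (cb + (norm k)\<^sup>2) ^ \<gamma>"
      using C by (intro mult_left_mono power_mono) auto
    then show ?thesis
      using \<omega> order_trans by blast
  qed
  ultimately show ?thesis
    using that \<open>0 < C\<close> by blast
qed

locale contraction_setting =
  fixes v \<omega> \<Omega> :: "real^'d::finite \<Rightarrow> real" and \<alpha> C :: real and \<gamma> :: nat
  assumes v_measurable [measurable]: "v \<in> borel_measurable borel"
    and \<omega>_measurable [measurable]: "\<omega> \<in> borel_measurable borel"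
    and \<omega>_nonneg: "\<And>k. 0 \<le> \<omega> k" and \<Omega>_nonneg: "\<And>p. 0 \<le> \<Omega> p"
    and C_pos: "0 < C" and \<gamma>_pos: "0 < \<gamma>"
    and \<alpha>_less: "2 * \<alpha> < CARD('d)" and \<delta>_less: "CARD('d) - 2 * \<alpha> - \<gamma> < \<gamma>"
    and v_bound: "\<And>k. k \<noteq> 0 \<Longrightarrow> \<bar>v k\<bar> \<le> C * norm k powr (-\<alpha>)"
    and \<omega>_lower: "\<And>k. C * norm k ^ \<gamma> \<le> \<omega> k"
begin

(* The one-particle integral of |v|^2 (E + omega)^-e is finite for
   e > (d - 2 alpha)/gamma = 1 + theta. *)
definition \<theta> :: real where
  "\<theta> = delta \<alpha> \<gamma> TYPE('d) / \<gamma>"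

lemma \<theta>_bounds: "-1 < \<theta>" "\<theta> < 1"
  using \<alpha>_less \<delta>_less \<gamma>_pos by (simp_all add: \<theta>_def delta_def field_simps)

lemma one_particle_bound:
  assumes "1 + \<theta> < e0"
  obtains K where "K \<ge> 0"
    "\<And>E e. 0 < E \<Longrightarrow> e0 \<le> e \<Longrightarrow>
       (\<integral>\<^sup>+x. ennreal (\<bar>v x\<bar>\<^sup>2 * (E + \<omega> x) powr (-e)) \<partial>lborel) \<le> ennreal (K * E powr (1 + \<theta> - e))"
proof -
  have dim: "(DIM(real^'d) - 2 * \<alpha>) / \<gamma> = 1 + \<theta>"
    using \<gamma>_pos by (simp add: \<theta>_def delta_def field_simps)
  have "\<exists>K\<ge>0. \<forall>E>0. \<forall>e\<ge>e0. (\<integral>\<^sup>+x. ennreal (\<bar>v x\<bar>\<^sup>2 * (E + \<omega> x) powr (-e)) \<partial>lborel)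
      \<le> ennreal (K * E powr ((DIM(real^'d) - 2 * \<alpha>) / \<gamma> - e))"
    using \<alpha>_less assms dim
    by (intro nn_integral_square_powr_weight_le[OF v_measurable \<omega>_measurable C_pos \<gamma>_pos _ _
          \<omega>_lower v_bound]) auto
  then show ?thesis
    using that unfolding dim by blast
qed

lemma permutation_integrand_le:
  fixes \<kappa> \<kappa>' :: "'d kernel"
  assumes J: "J permutes {..<Suc n}" and E: "0 < E"
    and "0 \<le> A1" "0 \<le> A2" and \<beta>: "0 \<le> \<beta>" "\<beta> \<le> 1" and r: "0 \<le> r" "r \<le> 1"
    and \<kappa>: "\<And>\<Xi>. cmod (\<kappa> Q \<Xi> p E) \<le> A1 * rho_tilde v \<omega> (Suc n) a \<Xi> E"
    and \<kappa>': "\<And>U. cmod (\<kappa>' U R p E) \<le> A2 * rho v \<omega> (Suc n) b U E"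
  shows "cmod (\<kappa> Q \<Xi> p E * \<kappa>' (\<lambda>k. \<Xi> (inv J k)) R p E /
             complex_of_real (\<Omega> (p + (\<Sum>i<Suc n. \<Xi> i)) + E + (\<Sum>i<Suc n. \<omega> (\<Xi> i))))
    \<le> A1 * A2 * (\<Prod>k<Suc n. \<bar>v (\<Xi> k)\<bar>\<^sup>2 * (E + \<omega> (\<Xi> k)) powr (-contraction_exponent n a b \<beta> r J k))"
proof -
  define D where "D = \<Omega> (p + (\<Sum>i<Suc n. \<Xi> i)) + E + (\<Sum>i<Suc n. \<omega> (\<Xi> i))"
  have "D > 0"
    using E \<Omega>_nonneg \<omega>_nonneg by (simp add: D_def add_nonneg_pos add_pos_nonneg sum_nonneg)
  have "cmod (\<kappa> Q \<Xi> p E * \<kappa>' (\<lambda>k. \<Xi> (inv J k)) R p E / complex_of_real D)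
      = cmod (\<kappa> Q \<Xi> p E) * cmod (\<kappa>' (\<lambda>k. \<Xi> (inv J k)) R p E) / D"
    using \<open>D > 0\<close> by (simp only: norm_mult norm_divide norm_of_real abs_of_pos)
  also have "\<dots> \<le> (A1 * rho_tilde v \<omega> (Suc n) a \<Xi> E) * (A2 * rho v \<omega> (Suc n) b (\<lambda>k. \<Xi> (inv J k)) E) / D"
    using \<open>D > 0\<close> \<open>0 \<le> A1\<close> rho_tilde_nonneg[where \<omega>=\<omega>, OF E \<omega>_nonneg]
    by (intro divide_right_mono mult_mono \<kappa> \<kappa>') auto
  also have "\<dots> = (A1 * A2) * (rho_tilde v \<omega> (Suc n) a \<Xi> E * rho v \<omega> (Suc n) b (\<lambda>k. \<Xi> (inv J k)) E / D)"
    by simp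
  also have "\<dots> \<le> A1 * A2 * (\<Prod>k<Suc n. \<bar>v (\<Xi> k)\<bar>\<^sup>2 * (E + \<omega> (\<Xi> k)) powr (-contraction_exponent n a b \<beta> r J k))"
    unfolding D_def using \<open>0 \<le> A1\<close> \<open>0 \<le> A2\<close>
    by (intro mult_left_mono rho_tilde_rho_resolvent_le_prod[OF J E \<omega>_nonneg \<Omega>_nonneg \<beta> r]) auto
  finally show ?thesis
    unfolding D_def .
qed

lemma permutation_term_le:
  fixes \<kappa> \<kappa>' :: "'d kernel"
  assumes J: "J permutes {..<Suc n}" and E: "0 < E"
    and "0 \<le> A1" "0 \<le> A2" "0 \<le> K" and \<beta>: "0 \<le> \<beta>" "\<beta> \<le> 1" and r: "0 \<le> r" "r \<le> 1"
    and \<kappa>: "\<And>\<Xi>. cmod (\<kappa> Q \<Xi> p E) \<le> A1 * rho_tilde v \<omega> (Suc n) a \<Xi> E"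
    and \<kappa>': "\<And>U. cmod (\<kappa>' U R p E) \<le> A2 * rho v \<omega> (Suc n) b U E"
    and particle: "\<And>k. k < Suc n \<Longrightarrow>
      (\<integral>\<^sup>+x. ennreal (\<bar>v x\<bar>\<^sup>2 * (E + \<omega> x) powr (-contraction_exponent n a b \<beta> r J k)) \<partial>lborel)
        \<le> ennreal (K * E powr (c - contraction_exponent n a b \<beta> r J k))"
  shows "cmod (\<integral>\<Xi>. \<kappa> Q \<Xi> p E * \<kappa>' (\<lambda>k. \<Xi> (inv J k)) R p E /
             complex_of_real (\<Omega> (p + (\<Sum>i<Suc n. \<Xi> i)) + E + (\<Sum>i<Suc n. \<omega> (\<Xi> i))) \<partial>Rnd (Suc n))
      \<le> A1 * A2 * K ^ Suc n * E powr (real (Suc n) * c - (\<Sum>k<Suc n. contraction_exponent n a b \<beta> r J k))"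
proof -
  let ?e = "contraction_exponent n a b \<beta> r J"
  let ?g = "\<lambda>k x. ennreal (\<bar>v x\<bar>\<^sup>2 * (E + \<omega> x) powr (-?e k))"
  let ?f = "\<lambda>\<Xi>. \<kappa> Q \<Xi> p E * \<kappa>' (\<lambda>k. \<Xi> (inv J k)) R p E /
             complex_of_real (\<Omega> (p + (\<Sum>i<Suc n. \<Xi> i)) + E + (\<Sum>i<Suc n. \<omega> (\<Xi> i)))"
  have integrand: "ennreal (cmod (?f \<Xi>)) \<le> ennreal (A1 * A2) * (\<Prod>k<Suc n. ?g k (\<Xi> k))" for \<Xi>
    using permutation_integrand_le[where \<kappa>=\<kappa> and \<kappa>'=\<kappa>' and p=p and Q=Q and R=R,
        OF J E \<open>0 \<le> A1\<close> \<open>0 \<le> A2\<close> \<beta> r \<kappa> \<kappa>', of \<Xi>] \<open>0 \<le> A1\<close> \<open>0 \<le> A2\<close>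
    by (simp add: ennreal_leI prod_ennreal ennreal_mult[symmetric] prod_nonneg del: ennreal_mult)
  have "(\<integral>\<^sup>+\<Xi>. (\<Prod>k<Suc n. ?g k (\<Xi> k)) \<partial>Rnd (Suc n)) = (\<Prod>k<Suc n. \<integral>\<^sup>+x. ?g k x \<partial>lborel)"
    by (rule nn_integral_Rnd_prod) measurable
  also have "\<dots> \<le> (\<Prod>k<Suc n. ennreal (K * E powr (c - ?e k)))"
    by (intro prod_mono_ennreal particle) simp
  also have "\<dots> = ennreal (\<Prod>k<Suc n. K * E powr (c - ?e k))"
    using \<open>0 \<le> K\<close> by (intro prod_ennreal) simp
  also have "(\<Prod>k<Suc n. K * E powr (c - ?e k)) = K ^ Suc n * (\<Prod>k<Suc n. E powr (c - ?e k))"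
    by (simp add: prod.distrib)
  also have "(\<Prod>k<Suc n. E powr (c - ?e k)) = E powr (\<Sum>k<Suc n. c - ?e k)"
    using E by (intro powr_sum[symmetric]) simp
  also have "(\<Sum>k<Suc n. c - ?e k) = real (Suc n) * c - (\<Sum>k<Suc n. ?e k)"
    by (simp add: sum_subtractf)
  finally have product: "(\<integral>\<^sup>+\<Xi>. (\<Prod>k<Suc n. ?g k (\<Xi> k)) \<partial>Rnd (Suc n))
      \<le> ennreal (K ^ Suc n * E powr (real (Suc n) * c - (\<Sum>k<Suc n. ?e k)))" .
  have "ennreal (cmod (integral\<^sup>L (Rnd (Suc n)) ?f)) \<le> (\<integral>\<^sup>+\<Xi>. ennreal (cmod (?f \<Xi>)) \<partial>Rnd (Suc n))"
    by (rule norm_integral_le_nn_integral)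
  also have "\<dots> \<le> ennreal (A1 * A2) * (\<integral>\<^sup>+\<Xi>. (\<Prod>k<Suc n. ?g k (\<Xi> k)) \<partial>Rnd (Suc n))"
    unfolding Rnd_def by (subst nn_integral_cmult[symmetric]) (measurable, intro nn_integral_mono integrand)
  also have "\<dots> \<le> ennreal (A1 * A2) * ennreal (K ^ Suc n * E powr (real (Suc n) * c - (\<Sum>k<Suc n. ?e k)))"
    by (intro mult_left_mono product) simp
  finally show ?thesis
    using \<open>0 \<le> A1\<close> \<open>0 \<le> A2\<close> \<open>0 \<le> K\<close>
    by (simp add: ennreal_mult[symmetric] mult.assoc ennreal_le_iff)
qed

lemma norm_full_contraction_le:
  fixes \<kappa> \<kappa>' :: "'d kernel"
  assumes E: "0 < E" and ab: "-1 \<le> a" "a \<le> 1" "-1 \<le> b" "b \<le> 1"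
    and "0 \<le> A1" "0 \<le> A2" "0 \<le> K"
    and \<kappa>: "\<And>\<Xi>. cmod (\<kappa> Q \<Xi> p E) \<le> A1 * rho_tilde v \<omega> (Suc n) a \<Xi> E"
    and \<kappa>': "\<And>U. cmod (\<kappa>' U R p E) \<le> A2 * rho v \<omega> (Suc n) b U E"
    and \<eta>: "0 < \<eta>" "\<eta> \<le> (1 - \<theta>)/2" "4 * real (Suc n) * \<eta> \<le> (a + b)/2 + real (Suc n) * (1 - \<theta>)"
    and particle: "\<And>e. 1 + \<theta> + \<eta> \<le> e \<Longrightarrow>
      (\<integral>\<^sup>+x. ennreal (\<bar>v x\<bar>\<^sup>2 * (E + \<omega> x) powr (-e)) \<partial>lborel) \<le> ennreal (K * E powr (1 + \<theta> - e))"
  shows "cmod (full_contraction \<omega> \<Omega> (Suc n) \<kappa> \<kappa>' Q R p E)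
    \<le> fact (Suc n) * A1 * A2 * K ^ Suc n * E powr (-((a + b)/2 + real (Suc n) * (1 - \<theta>)))"
proof -
  define S where "S = (a + b)/2 + real (Suc n) * (1 - \<theta>)"
  define \<beta> where "\<beta> = (1 - \<theta>)/2 - \<eta>"
  define r where "r = (2 + b - a)/4"
  have \<beta>_range: "0 \<le> \<beta>" "\<beta> \<le> 1" and r_range: "0 \<le> r" "r \<le> 1"
    using \<eta> \<theta>_bounds ab by (auto simp: \<beta>_def r_def field_simps)
  have permutation_term: "cmod (\<integral>\<Xi>. \<kappa> Q \<Xi> p E * \<kappa>' (\<lambda>k. \<Xi> (inv J k)) R p E /
             complex_of_real (\<Omega> (p + (\<Sum>i<Suc n. \<Xi> i)) + E + (\<Sum>i<Suc n. \<omega> (\<Xi> i))) \<partial>Rnd (Suc n))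
      \<le> A1 * A2 * K ^ Suc n * E powr (-S)" if J: "J permutes {..<Suc n}" for J
  proof -
    have "1 + \<theta> + \<eta> \<le> contraction_exponent n a b \<beta> r J k" for k
      unfolding \<beta>_def r_def using \<eta>(1,3) by (rule contraction_exponent_ge)
    then have "cmod (\<integral>\<Xi>. \<kappa> Q \<Xi> p E * \<kappa>' (\<lambda>k. \<Xi> (inv J k)) R p E /
             complex_of_real (\<Omega> (p + (\<Sum>i<Suc n. \<Xi> i)) + E + (\<Sum>i<Suc n. \<omega> (\<Xi> i))) \<partial>Rnd (Suc n))
      \<le> A1 * A2 * K ^ Suc n * E powr (real (Suc n) * (1 + \<theta>) - (\<Sum>k<Suc n. contraction_exponent n a b \<beta> r J k))"
      using assms \<beta>_range r_range by (intro permutation_term_le[OF J E]) auto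
    also have "real (Suc n) * (1 + \<theta>) - (\<Sum>k<Suc n. contraction_exponent n a b \<beta> r J k) = -S"
      unfolding sum_contraction_exponent[OF J] S_def by (simp add: algebra_simps)
    finally show ?thesis .
  qed
  have "cmod (full_contraction \<omega> \<Omega> (Suc n) \<kappa> \<kappa>' Q R p E) \<le>
      (\<Sum>J\<in>{J. J permutes {..<Suc n}}. A1 * A2 * K ^ Suc n * E powr (-S))"
    unfolding full_contraction_def by (rule order_trans[OF norm_sum sum_mono]) (use permutation_term in auto)
  also have "\<dots> = fact (Suc n) * A1 * A2 * K ^ Suc n * E powr (-S)"
    by (simp add: card_permutations algebra_simps)
  finally show ?thesis
    unfolding S_def .
qed

lemma norm_full_contraction_le_split:
  fixes \<kappa> \<kappa>' :: "'d kernel"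
  assumes E: "0 < E" and lam: "0 \<le> lam" "0 \<le> lam'" "max lam lam' \<le> \<sigma>" and t: "t \<in> {\<sigma>-1..1-\<sigma>}"
    and "0 \<le> A" "0 \<le> A'" "0 \<le> K"
    and \<kappa>: "\<And>Q R s. s \<in> {lam-1..1-lam} \<Longrightarrow>
      cmod (\<kappa> Q R p E) \<le> A * (rho v \<omega> (Suc n) (lam + s) Q E * rho_tilde v \<omega> (Suc n) (lam - s) R E)"
    and \<kappa>': "\<And>Q R s. s \<in> {lam'-1..1-lam'} \<Longrightarrow>
      cmod (\<kappa>' Q R p E) \<le> A' * (rho v \<omega> (Suc n) (lam' + s) Q E * rho_tilde v \<omega> (Suc n) (lam' - s) R E)"
    and \<eta>: "0 < \<eta>" "\<eta> \<le> (1 - \<theta>)/2" "4 * real (Suc n) * \<eta> \<le> lam + lam' - \<sigma> + real (Suc n) * (1 - \<theta>)"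
    and particle: "\<And>e. 1 + \<theta> + \<eta> \<le> e \<Longrightarrow>
      (\<integral>\<^sup>+x. ennreal (\<bar>v x\<bar>\<^sup>2 * (E + \<omega> x) powr (-e)) \<partial>lborel) \<le> ennreal (K * E powr (1 + \<theta> - e))"
  shows "cmod (full_contraction \<omega> \<Omega> (Suc n) \<kappa> \<kappa>' Q R p E)
    \<le> fact (Suc n) * A * A' * K ^ Suc n * E powr (-(lam + lam' - \<sigma> + real (Suc n) * (1 - \<theta>)))
      * (rho v \<omega> (Suc n) (\<sigma> + t) Q E * rho_tilde v \<omega> (Suc n) (\<sigma> - t) R E)"
proof -
  define a where "a = 2 * lam - \<sigma> - t"
  define b where "b = 2 * lam' - \<sigma> + t"
  have ab: "-1 \<le> a" "a \<le> 1" "-1 \<le> b" "b \<le> 1" "(a + b)/2 = lam + lam' - \<sigma>"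
    using lam t by (auto simp: a_def b_def field_simps)
  have "cmod (\<kappa> Q \<Xi> p E) \<le> (A * rho v \<omega> (Suc n) (\<sigma> + t) Q E) * rho_tilde v \<omega> (Suc n) a \<Xi> E" for \<Xi>
  proof -
    have "lam + (\<sigma> + t - lam) = \<sigma> + t" "lam - (\<sigma> + t - lam) = a"
      by (simp_all add: a_def)
    moreover have "\<sigma> + t - lam \<in> {lam-1..1-lam}"
      using lam t by auto
    ultimately show ?thesis
      using \<kappa>[of "\<sigma> + t - lam" Q \<Xi>] by (simp add: mult.assoc)
  qed
  moreover have "cmod (\<kappa>' U R p E) \<le> (A' * rho_tilde v \<omega> (Suc n) (\<sigma> - t) R E) * rho v \<omega> (Suc n) b U E" for U
  proof -
    have "lam' + (lam' - \<sigma> + t) = b" "lam' - (lam' - \<sigma> + t) = \<sigma> - t"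
      by (simp_all add: b_def)
    moreover have "lam' - \<sigma> + t \<in> {lam'-1..1-lam'}"
      using lam t by auto
    ultimately show ?thesis
      using \<kappa>'[of "lam' - \<sigma> + t" U R] by (simp add: mult_ac)
  qed
  ultimately have "cmod (full_contraction \<omega> \<Omega> (Suc n) \<kappa> \<kappa>' Q R p E) \<le> fact (Suc n)
      * (A * rho v \<omega> (Suc n) (\<sigma> + t) Q E) * (A' * rho_tilde v \<omega> (Suc n) (\<sigma> - t) R E)
      * K ^ Suc n * E powr (-((a + b)/2 + real (Suc n) * (1 - \<theta>)))"
    using \<open>0 \<le> A\<close> \<open>0 \<le> A'\<close> rho_nonneg[where \<omega>=\<omega>, OF E \<omega>_nonneg] rho_tilde_nonneg[where \<omega>=\<omega>, OF E \<omega>_nonneg]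
    by (intro norm_full_contraction_le[OF E ab(1-4) _ _ \<open>0 \<le> K\<close> _ _ \<eta>(1,2) \<eta>(3)[folded ab(5)] particle]) auto
  then show ?thesis
    unfolding ab(5) by (simp add: mult_ac)
qed

lemma contraction_margin:
  assumes "0 < S" "0 < n"
  shows "\<exists>\<eta> K. 0 < \<eta> \<and> \<eta> \<le> (1 - \<theta>)/2 \<and> 4 * real n * \<eta> \<le> S \<and> 0 \<le> K \<and>
    (\<forall>E e. 0 < E \<longrightarrow> 1 + \<theta> + \<eta> \<le> e \<longrightarrow>
      (\<integral>\<^sup>+x. ennreal (\<bar>v x\<bar>\<^sup>2 * (E + \<omega> x) powr (-e)) \<partial>lborel) \<le> ennreal (K * E powr (1 + \<theta> - e)))"
proof -
  define \<eta> where "\<eta> = min (S / (4 * n)) ((1 - \<theta>)/2)"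
  have "0 < \<eta>"
    using assms \<theta>_bounds by (simp add: \<eta>_def)
  moreover have "\<eta> \<le> (1 - \<theta>)/2"
    unfolding \<eta>_def by (rule min.cobounded2)
  moreover have "4 * real n * \<eta> \<le> S"
  proof -
    have "\<eta> \<le> S / (4 * n)"
      by (simp add: \<eta>_def)
    then show ?thesis
      using assms by (simp add: field_simps)
  qed
  moreover obtain K where "0 \<le> K" "\<And>E e. 0 < E \<Longrightarrow> 1 + \<theta> + \<eta> \<le> e \<Longrightarrow>
      (\<integral>\<^sup>+x. ennreal (\<bar>v x\<bar>\<^sup>2 * (E + \<omega> x) powr (-e)) \<partial>lborel) \<le> ennreal (K * E powr (1 + \<theta> - e))"
    using one_particle_bound[of "1 + \<theta> + \<eta>"] \<open>0 < \<eta>\<close> by auto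
  ultimately show ?thesis
    by blast
qed

lemma full_contraction_estimate:
  fixes \<kappa> \<kappa>' :: "'d kernel"
  assumes n: "1 \<le> n" and lam: "0 \<le> lam" "0 \<le> lam'"
    and \<sigma>: "max lam lam' \<le> \<sigma>" "\<sigma> \<le> 1" "\<sigma> < lam + lam' + n * (1 - \<theta>)"
    and \<tau>: "\<tau> \<le> \<mu> + \<mu>' + (lam + lam' - \<sigma> + n * (1 - \<theta>))"
    and "0 \<le> c" "0 \<le> c'"
    and \<kappa>: "\<And>Q R p E s. 1 \<le> E \<Longrightarrow> s \<in> {lam-1..1-lam} \<Longrightarrow>
      cmod (\<kappa> Q R p E) \<le> c * E powr (-\<mu>) * (rho v \<omega> n (lam + s) Q E * rho_tilde v \<omega> n (lam - s) R E)"
    and \<kappa>': "\<And>Q R p E s. 1 \<le> E \<Longrightarrow> s \<in> {lam'-1..1-lam'} \<Longrightarrow>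
      cmod (\<kappa>' Q R p E) \<le> c' * E powr (-\<mu>') * (rho v \<omega> n (lam' + s) Q E * rho_tilde v \<omega> n (lam' - s) R E)"
  shows "\<exists>C. \<forall>Q R p E. 1 \<le> E \<longrightarrow> cmod (full_contraction \<omega> \<Omega> n \<kappa> \<kappa>' Q R p E)
    \<le> C * E powr (-\<tau>) * (INF s\<in>{\<sigma>-1..1-\<sigma>}. rho v \<omega> n (\<sigma> + s) Q E * rho_tilde v \<omega> n (\<sigma> - s) R E)"
proof -
  obtain m where m: "n = Suc m"
    using n by (cases n) auto
  define S where "S = lam + lam' - \<sigma> + n * (1 - \<theta>)"
  have "0 < S" "0 < n"
    using \<sigma>(3) n by (simp_all add: S_def)
  then obtain \<eta> K where \<eta>: "0 < \<eta>" "\<eta> \<le> (1 - \<theta>)/2" "4 * real n * \<eta> \<le> S" and "0 \<le> K"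
    and particle: "\<And>E e. 0 < E \<Longrightarrow> 1 + \<theta> + \<eta> \<le> e \<Longrightarrow>
      (\<integral>\<^sup>+x. ennreal (\<bar>v x\<bar>\<^sup>2 * (E + \<omega> x) powr (-e)) \<partial>lborel) \<le> ennreal (K * E powr (1 + \<theta> - e))"
    using contraction_margin by blast
  define C where "C = fact n * c * c' * K ^ n"
  have "cmod (full_contraction \<omega> \<Omega> n \<kappa> \<kappa>' Q R p E) \<le> C * E powr (-\<tau>)
      * (INF s\<in>{\<sigma>-1..1-\<sigma>}. rho v \<omega> n (\<sigma> + s) Q E * rho_tilde v \<omega> n (\<sigma> - s) R E)"
    if E: "1 \<le> E" for Q R p E
  proof (rule le_mult_INF)
    fix t assume t: "t \<in> {\<sigma>-1..1-\<sigma>}"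
    let ?F = "rho v \<omega> n (\<sigma> + t) Q E * rho_tilde v \<omega> n (\<sigma> - t) R E"
    have "0 < E" "0 \<le> c * E powr (-\<mu>)" "0 \<le> c' * E powr (-\<mu>')"
      using E \<open>0 \<le> c\<close> \<open>0 \<le> c'\<close> by auto
    then have "cmod (full_contraction \<omega> \<Omega> n \<kappa> \<kappa>' Q R p E)
        \<le> fact n * (c * E powr (-\<mu>)) * (c' * E powr (-\<mu>')) * K ^ n * E powr (-S) * ?F"
      unfolding m S_def
      by (intro norm_full_contraction_le_split[where \<kappa>=\<kappa> and \<kappa>'=\<kappa>' and p=p and E=E and n=m,
            OF _ lam \<sigma>(1) t _ _ \<open>0 \<le> K\<close> \<kappa>[where p=p, OF E, unfolded m] \<kappa>'[where p=p, OF E, unfolded m]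
            \<eta>(1,2) \<eta>(3)[unfolded S_def m] particle])
    also have "\<dots> = C * (E powr (-\<mu>) * E powr (-\<mu>') * E powr (-S)) * ?F"
      by (simp add: C_def mult_ac)
    also have "E powr (-\<mu>) * E powr (-\<mu>') * E powr (-S) = E powr (-(\<mu> + \<mu>' + S))"
      by (simp add: powr_add[symmetric])
    also have "C * E powr (-(\<mu> + \<mu>' + S)) * ?F \<le> C * E powr (-\<tau>) * ?F"
      using \<tau> E \<open>0 \<le> c\<close> \<open>0 \<le> c'\<close> \<open>0 \<le> K\<close>
        rho_nonneg[where \<omega>=\<omega>, OF _ \<omega>_nonneg] rho_tilde_nonneg[where \<omega>=\<omega>, OF _ \<omega>_nonneg]
      by (intro mult_right_mono mult_left_mono powr_mono) (auto simp: C_def S_def)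
    finally show "cmod (full_contraction \<omega> \<Omega> n \<kappa> \<kappa>' Q R p E) \<le> C * E powr (-\<tau>) * ?F" .
  qed (use \<sigma>(2) \<open>0 \<le> c\<close> \<open>0 \<le> c'\<close> \<open>0 \<le> K\<close> in \<open>auto simp: C_def\<close>)
  then show ?thesis
    by blast
qed

end

theorem lemmaA4:
  fixes v \<omega> \<Omega> :: "real^'d::finite \<Rightarrow> real"
    and \<alpha> :: real and \<gamma> n :: nat
    and \<kappa> \<kappa>' :: "'d kernel"
    and \<mu> \<mu>' lam lam' \<sigma> :: real
  assumes SA: "standing_assumptions v \<omega> \<Omega> \<alpha> \<gamma>"
    and v_meas: "v \<in> borel_measurable borel"
    and \<omega>_meas: "\<omega> \<in> borel_measurable borel"
    and n: "n \<ge> 1"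
    and K: "\<kappa> \<in> kernel_class v \<omega> n" and K': "\<kappa>' \<in> kernel_class v \<omega> n"
    and \<mu>: "\<mu> \<ge> 0" and \<mu>': "\<mu>' \<ge> 0"
    and lam: "0 \<le> lam" "lam \<le> 1" and lam': "0 \<le> lam'" "lam' \<le> 1"
    and bound: "\<exists>c. \<forall>Q R p E. E \<ge> 1 \<longrightarrow> cmod (\<kappa> Q R p E) \<le>
        c * E powr (- \<mu>) * (INF s\<in>{lam-1..1-lam}.
              rho v \<omega> n (lam + s) Q E * rho_tilde v \<omega> n (lam - s) R E)"
    and bound': "\<exists>c. \<forall>Q R p E. E \<ge> 1 \<longrightarrow> cmod (\<kappa>' Q R p E) \<le>
        c * E powr (- \<mu>') * (INF s\<in>{lam'-1..1-lam'}.
              rho v \<omega> n (lam' + s) Q E * rho_tilde v \<omega> n (lam' - s) R E)"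
    and \<sigma>: "0 \<le> \<sigma>" "\<sigma> \<le> 1" "max lam lam' \<le> \<sigma>"
      "\<sigma> < lam + lam' + real n * (1 - delta \<alpha> \<gamma> TYPE('d) / real \<gamma>)"
  shows "\<exists>c. \<forall>Q R p E. E \<ge> 1 \<longrightarrow>
      cmod (full_contraction \<omega> \<Omega> n \<kappa> \<kappa>' Q R p E) \<le>
        c * E powr (- (\<mu> + \<mu>' + max (lam + lam' + real n * (1 - delta \<alpha> \<gamma> TYPE('d) / real \<gamma>) - 1) 0))
          * (INF s\<in>{\<sigma>-1..1-\<sigma>}. rho v \<omega> n (\<sigma> + s) Q E * rho_tilde v \<omega> n (\<sigma> - s) R E)"
proof -
  \<comment> \<open>Only the kernel bounds enter.\<close>
  obtain C where C: "0 < C" "\<And>k. k \<noteq> 0 \<Longrightarrow> \<bar>v k\<bar> \<le> C * norm k powr (-\<alpha>)" "\<And>k. C * norm k ^ \<gamma> \<le> \<omega> k"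
    using standing_assumptions_bounds[OF SA] by blast
  interpret contraction_setting v \<omega> \<Omega> \<alpha> C \<gamma>
    using SA v_meas \<omega>_meas C by unfold_locales (auto simp: standing_assumptions_def)
  obtain c where "0 \<le> c" and \<kappa>: "\<And>Q R p E s. 1 \<le> E \<Longrightarrow> s \<in> {lam-1..1-lam} \<Longrightarrow>
      cmod (\<kappa> Q R p E) \<le> c * E powr (-\<mu>) * (rho v \<omega> n (lam + s) Q E * rho_tilde v \<omega> n (lam - s) R E)"
    using kernel_bound_pointwise[OF bound \<omega>_nonneg] by blast
  obtain c' where "0 \<le> c'" and \<kappa>': "\<And>Q R p E s. 1 \<le> E \<Longrightarrow> s \<in> {lam'-1..1-lam'} \<Longrightarrow>
      cmod (\<kappa>' Q R p E) \<le> c' * E powr (-\<mu>') * (rho v \<omega> n (lam' + s) Q E * rho_tilde v \<omega> n (lam' - s) R E)"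
    using kernel_bound_pointwise[OF bound' \<omega>_nonneg] by blast
  show ?thesis
    using \<sigma> by (intro full_contraction_estimate[where \<kappa>=\<kappa> and \<kappa>'=\<kappa>' and \<mu>=\<mu> and \<mu>'=\<mu>',
        OF n lam(1) lam'(1) \<sigma>(3,2) \<sigma>(4)[folded \<theta>_def] _ \<open>0 \<le> c\<close> \<open>0 \<le> c'\<close> \<kappa> \<kappa>']) (auto simp: \<theta>_def)
qed

end
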